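(* Let $\mathbf M_k=\mathbf U_k\boldsymbol\Sigma_k\mathbf V_k^\top$ be compact SVDs, $\mathbf U:=(\mathbf U_1,\dots,\mathbf U_K)\in\mathbb R^{d_1\times\mathring r}$, $\mathbf V:=(\mathbf V_1,\dots,\mathbf V_K)\in\mathbb R^{d_2\times\mathring r}$ with $\mathring r=\sum_kr_k$. Then $$\mathscr M_1(\mathcal M)\mathscr M_1(\mathcal M)^\top=\mathbf U\,\mathrm{diag}(n_1^*\boldsymbol\Sigma_1^2,\dots,n_K^*\boldsymbol\Sigma_K^2)\,\mathbf U^\top,\qquad \mathscr M_2(\mathcal M)\mathscr M_2(\mathcal M)^\top=\mathbf V\,\mathrm{diag}(n_1^*\boldsymbol\Sigma_1^2,\dots,n_K^*\boldsymbol\Sigma_K^2)\,\mathbf V^\top,$$ and $\kappa_1\le\kappa_0\kappa(\mathbf U)(n^*_{\max}/n^*_{\min})^{1/2}$, $\kappa_2\le\kappa_0\kappa(\mathbf V)(n^*_{\max}/n^*_{\min})^{1/2}$, where $n^*_{\min}=\min_kn_k^*$, $n^*_{\max}=\max_kn_k^*$. Moreover, if $r_1=\max_k r_k$ and $\mathrm{rank}(\mathbf U)=\mathrm{rank}(\mathbf V)=r_1$ (all $\mathbf M_k$ have column and row spaces contained in those of $\mathbf M_1$), then $\max\{\kappa_1,\kappa_2\}\le\kappa_0(K^2/\alpha)^{1/2}$; and if the column spaces of the $\mathbf U_k$ are mutually orthogonal and the column spaces of the $\mathbf V_k$ are mutually orthogonal (so $\mathrm{rank}(\mathbf U)=\mathrm{rank}(\mathbf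 V)=\mathring r$), then $\max\{\kappa_1,\kappa_2\}\le\kappa_0(K/\alpha)^{1/2}$.
   Context: Deterministic setting: $\mathbf M_1,\dots,\mathbf M_K\in\mathbb R^{d_1\times d_2}$ with ranks $r_k\ge1$, labels $s^*\in[K]^n$ with $n_k^*:=|\{i:s_i^*=k\}|\ge1$, $\alpha:=\min_kn_k^*\cdot(n/K)^{-1}$. $\mathcal M\in\mathbb R^{d_1\times d_2\times n}$ has $i$-th slice $\mathbf M_{s_i^*}$; $\mathscr M_1(\mathcal M)\in\mathbb R^{d_1\times d_2n}$ has columns $\mathcal M(:,i_2,i_3)$ and $\mathscr M_2(\mathcal M)\in\mathbb R^{d_2\times d_1n}$ has columns $\mathcal M(i_1,:,i_3)$. For a nonzero matrix $\mathbf A$, its condition number $\kappa(\mathbf A)$ is the ratio of its largest to its smallest nonzero singular value; $\kappa_j:=\kappa(\mathscr M_j(\mathcal M))$ for $j=1,2$. $\kappa_0:=\max_k\|\mathbf M_k\|/\min_k\sigma_{r_k}(\mathbf M_k)$. *)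

theory Defs
  imports "Jordan_Normal_Form.DL_Rank" "Jordan_Normal_Form.Char_Poly"
begin

definition nz_sing_vals :: "real mat \<Rightarrow> real set" where
  "nz_sing_vals A = {sqrt e | e. eigenvalue (A\<^sup>T * A) e \<and> e > 0}"

definition sig_max :: "real mat \<Rightarrow> real" where
  "sig_max A = Max (nz_sing_vals A)"

definition sig_min :: "real mat \<Rightarrow> real" where
  "sig_min A = Min (nz_sing_vals A)"

definition cond_num :: "real mat \<Rightarrow> real" where
  "cond_num A = sig_max A / sig_min A"

definition blk_off :: "(nat \<Rightarrow> nat) \<Rightarrow> nat \<Rightarrow> nat" where
  "blk_off r k = (\<Sum>l<k. r l)"

definition blk_of :: "(nat \<Rightarrow> nat) \<Rightarrow> nat \<Rightarrow> nat" where
  "blk_of r j = (LEAST k. j < blk_off r (Suc k))"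

text \<open>Horizontal concatenation (Us 0, ..., Us (K-1)), each Us k of size d x r k.\<close>
definition hcat :: "nat \<Rightarrow> (nat \<Rightarrow> nat) \<Rightarrow> nat \<Rightarrow> (nat \<Rightarrow> real mat) \<Rightarrow> real mat" where
  "hcat d r K Us = mat d (blk_off r K)
     (\<lambda>(a,j). Us (blk_of r j) $$ (a, j - blk_off r (blk_of r j)))"

definition block_diag :: "(nat \<Rightarrow> nat) \<Rightarrow> nat \<Rightarrow> (nat \<Rightarrow> real mat) \<Rightarrow> real mat" where
  "block_diag r K Ds = mat (blk_off r K) (blk_off r K)
     (\<lambda>(i,j). if blk_of r i = blk_of r j
              then Ds (blk_of r i) $$ (i - blk_off r (blk_of r i), j - blk_off r (blk_of r j))
              else 0)"

text \<open>Tensor with i-th slice Ms (s i), i < n. Mode-1 unfolding (d1 x d2 n): column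
  with index i3*d2 + i2 is the fibre T(:,i2,i3). Mode-2 unfolding (d2 x d1 n): column
  with index i3*d1 + i1 is the fibre T(i1,:,i3).\<close>
definition unfold1 :: "nat \<Rightarrow> nat \<Rightarrow> nat \<Rightarrow> (nat \<Rightarrow> real mat) \<Rightarrow> (nat \<Rightarrow> nat) \<Rightarrow> real mat" where
  "unfold1 d1 d2 n Ms s = mat d1 (d2 * n) (\<lambda>(a,j). Ms (s (j div d2)) $$ (a, j mod d2))"

definition unfold2 :: "nat \<Rightarrow> nat \<Rightarrow> nat \<Rightarrow> (nat \<Rightarrow> real mat) \<Rightarrow> (nat \<Rightarrow> nat) \<Rightarrow> real mat" where
  "unfold2 d1 d2 n Ms s = mat d2 (d1 * n) (\<lambda>(b,j). Ms (s (j div d1)) $$ (j mod d1, b))"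

definition cluster_size :: "nat \<Rightarrow> (nat \<Rightarrow> nat) \<Rightarrow> nat \<Rightarrow> nat" where
  "cluster_size n s k = card {i. i < n \<and> s i = k}"

end

theory Submission
  imports Defs "HOL-Analysis.Function_Topology"
begin

text \<open>
  Grouping the columns of the mode-1 unfolding by label gives
  M1 M1^T = \<Sum>k n_k M_k M_k^T = \<Sum>k n_k U_k \<Sigma>_k^2 U_k^T = U D U^T.
  A squared singular value of M1 is the Rayleigh quotient of U D U^T at an eigenvector w, which
  lies in the range of U; with y = U^T w that quotient is y^T D y / |w|^2, caught between
  n_min \<sigma>_min^2 |y|^2 / |w|^2 and n_max \<sigma>_max^2 |y|^2 / |w|^2, where \<sigma>_min and \<sigma>_max
  are the extreme singular values over all slices. So \<kappa>_1 is at most \<kappa>_0 (n_max / n_min)^(1/2)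
  times the square root of the ratio between the largest and the smallest value of
  |U^T w|^2 / |w|^2 for nonzero w in the range of U. That ratio is \<kappa>(U)^2 in general, at most K
  when the first block spans the range of U (Bessel's inequality), and 1 when the blocks are
  mutually orthogonal. The mode-2 unfolding is the mode-1 unfolding of the transposed slices.
  Extremal Rayleigh quotients exist by compactness of the unit sphere and are eigenvalues by a
  first-order argument.
\<close>

lemma mult_mat_vec_zero: "A \<in> carrier_mat m n \<Longrightarrow> A *\<^sub>v 0\<^sub>v n = (0\<^sub>v m :: real vec)"
  by (intro eq_vecI) (auto simp: scalar_prod_def)

lemma scalar_prod_self_nonneg: "0 \<le> (v :: real vec) \<bullet> v"
  unfolding scalar_prod_def by (intro sum_nonneg) auto

lemma scalar_prod_self_eq_0:
  assumes "(v :: real vec) \<in> carrier_vec n" "v \<bullet> v = 0"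
  shows "v = 0\<^sub>v n"
proof -
  have "\<forall>i\<in>{0..<dim_vec v}. v $ i * v $ i = 0"
    using assms(2) unfolding scalar_prod_def by (subst sum_nonneg_eq_0_iff[symmetric]) auto
  then show ?thesis using assms(1) by (intro eq_vecI) auto
qed

lemma scalar_prod_self_pos:
  assumes "(v :: real vec) \<in> carrier_vec n" "v \<noteq> 0\<^sub>v n"
  shows "0 < v \<bullet> v"
  using scalar_prod_self_eq_0[OF assms(1)] assms(2) scalar_prod_self_nonneg[of v] by force

lemma scalar_prod_self_eq_sum: "(y :: real vec) \<in> carrier_vec n \<Longrightarrow> y \<bullet> y = (\<Sum>j<n. y $ j * y $ j)"
  by (simp add: scalar_prod_def atLeast0LessThan)

lemma smult_vec_eq_0_imp:
  assumes "(x :: real vec) \<in> carrier_vec n" "c \<cdot>\<^sub>v x = 0\<^sub>v n" "c \<noteq> 0"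
  shows "x = 0\<^sub>v n"
proof (rule eq_vecI)
  fix i assume "i < dim_vec (0\<^sub>v n :: real vec)"
  then have i: "i < n" by simp
  have "(c \<cdot>\<^sub>v x) $ i = 0" using assms(2) i by simp
  then show "x $ i = 0\<^sub>v n $ i" using i assms(1,3) by simp
qed (use assms in simp)

lemma mult_mat_vec_unit_vec:
  assumes "(A :: real mat) \<in> carrier_mat m n" "i < n"
  shows "A *\<^sub>v unit_vec n i = col A i"
  using assms by (intro eq_vecI) (auto simp: scalar_prod_right_unit)

lemma orthogonal_complement_add:
  "Y \<subseteq> carrier_vec p \<Longrightarrow> (x :: real vec) \<in> vec_module.orthogonal_complement p Y \<Longrightarrow>
    z \<in> vec_module.orthogonal_complement p Y \<Longrightarrow> x + z \<in> vec_module.orthogonal_complement p Y"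
  unfolding vec_module.orthogonal_complement_def by (auto simp: add_scalar_prod_distrib[of _ p] subset_iff)

lemma orthogonal_complement_smult:
  "Y \<subseteq> carrier_vec p \<Longrightarrow> x \<in> vec_module.orthogonal_complement p Y \<Longrightarrow>
    (t :: real) \<cdot>\<^sub>v x \<in> vec_module.orthogonal_complement p Y"
  unfolding vec_module.orthogonal_complement_def by (auto simp: smult_scalar_prod_distrib[of _ p] subset_iff)

lemma orthogonal_complement_minus:
  "Y \<subseteq> carrier_vec p \<Longrightarrow> (x :: real vec) \<in> vec_module.orthogonal_complement p Y \<Longrightarrow>
    z \<in> vec_module.orthogonal_complement p Y \<Longrightarrow> x - z \<in> vec_module.orthogonal_complement p Y"
  unfolding vec_module.orthogonal_complement_def by (auto simp: minus_scalar_prod_distrib[of _ p] subset_iff)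

lemma scalar_prod_add_smult_self:
  assumes "(x :: real vec) \<in> carrier_vec n" "z \<in> carrier_vec n"
  shows "(x + t \<cdot>\<^sub>v z) \<bullet> (x + t \<cdot>\<^sub>v z) = x \<bullet> x + 2 * t * (x \<bullet> z) + t * t * (z \<bullet> z)"
  using assms by (simp add: add_scalar_prod_distrib[of _ n] scalar_prod_add_distrib[of _ n]
      comm_scalar_prod[of z n x] algebra_simps)

lemma linear_coeff_eq_0_if_quadratic_bound:
  fixes a c :: real
  assumes "\<forall>t. 2 * t * a \<le> t * t * c"
  shows "a = 0"
proof (rule ccontr)
  assume a: "a \<noteq> 0"
  define u where "u = \<bar>c\<bar> + 1"
  define t where "t = a / u"
  have pos: "u > 0" unfolding u_def by simp
  have tu: "t * u = a" unfolding t_def using pos by simp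
  have "2 * t * a \<le> t * t * c" using assms by simp
  then have "2 * t * a * (u * u) \<le> t * t * c * (u * u)" using pos by (simp add: mult_right_mono)
  moreover have "2 * t * a * (u * u) = 2 * (a * a) * u" using tu by (metis mult.assoc mult.commute)
  moreover have "t * t * c * (u * u) = (a * a) * c" using tu by (metis mult.assoc mult.commute)
  ultimately have "2 * (a * a) * u \<le> (a * a) * c" by simp
  moreover have "a * a > 0" using a by (cases "a > 0") (auto simp: zero_less_mult_iff)
  ultimately have "(a * a) * (2 * u) \<le> (a * a) * c" by (simp add: algebra_simps)
  then have "2 * u \<le> c" using \<open>a * a > 0\<close> mult_le_cancel_left_pos by blast
  then have "2 * (\<bar>c\<bar> + 1) \<le> c" unfolding u_def .
  then show False by (cases "c \<ge> 0") auto
qed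

subsection \<open>Extremal Rayleigh quotients\<close>

lemma continuous_on_fun_coordinate [continuous_intros]:
  "continuous_on S (\<lambda>f :: 'a \<Rightarrow> 'b :: topological_space. f i)"
  by (rule continuous_on_subset[OF continuous_on_product_coordinates]) simp

lemma compact_fun_unit_sphere:
  "compact {f :: nat \<Rightarrow> real. (\<forall>i\<ge>m. f i = 0) \<and> (\<Sum>i<m. f i * f i) = 1}"
  (is "compact ?S")
proof -
  let ?box = "Pi\<^sub>E UNIV (\<lambda>i. if i < m then {-1..1} else {0::real})"
  have "compact ?box"
    using compactin_PiE[of "\<lambda>_. euclidean" UNIV "\<lambda>i. if i < m then {-1..1} else {0::real}"]
    by (simp add: euclidean_product_topology)
  moreover have "closed ?S"
    unfolding Collect_conj_eq
    by (intro closed_Int closed_Collect_all closed_Collect_imp closed_Collect_eq continuous_intros) auto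
  moreover have "?S \<subseteq> ?box"
  proof
    fix f assume f: "f \<in> ?S"
    have "\<bar>f i\<bar> \<le> 1" if "i < m" for i
    proof -
      have "f i * f i \<le> (\<Sum>j<m. f j * f j)"
        using that by (intro member_le_sum) auto
      then show ?thesis using f abs_square_le_1[of "f i"] by (simp add: power2_eq_square)
    qed
    then show "f \<in> ?box" using f by (auto simp: abs_le_iff)
  qed
  ultimately have "compact (?box \<inter> ?S)" by blast
  then show ?thesis using \<open>?S \<subseteq> ?box\<close> by (simp add: Int_absorb1)
qed

text \<open>Unit vectors of length p are identified with functions on nat vanishing from p on, so
  that compactness in the product topology gives the extremum (a maximum for \<sigma> = 1, a minimum
  for \<sigma> = -1).\<close>
lemma rayleigh_attains_extremum_unit:
  fixes B :: "real mat" and Y :: "real vec set" and p q :: nat and \<sigma> :: real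
  defines "S \<equiv> {x \<in> vec_module.orthogonal_complement p Y. x \<bullet> x = 1}"
  assumes B: "B \<in> carrier_mat q p" and Y: "Y \<subseteq> carrier_vec p" and S: "S \<noteq> {}"
  shows "\<exists>x\<in>S. \<forall>y\<in>S. \<sigma> * ((B *\<^sub>v y) \<bullet> (B *\<^sub>v y)) \<le> \<sigma> * ((B *\<^sub>v x) \<bullet> (B *\<^sub>v x))"
proof -
  define T where "T = {f :: nat \<Rightarrow> real. (\<forall>i\<ge>p. f i = 0) \<and> (\<Sum>i<p. f i * f i) = 1}
    \<inter> {f. \<forall>y. y \<in> Y \<longrightarrow> (\<Sum>i<p. f i * y $ i) = 0}"
  define g where "g f = \<sigma> * (\<Sum>a<q. (\<Sum>j<p. B $$ (a,j) * f j) * (\<Sum>j<p. B $$ (a,j) * f j))"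
    for f :: "nat \<Rightarrow> real"
  have g: "g f = \<sigma> * ((B *\<^sub>v vec p f) \<bullet> (B *\<^sub>v vec p f))" for f
    using B by (simp add: g_def scalar_prod_def atLeast0LessThan row_def)
  have sprod_vec: "vec p f \<bullet> y = (\<Sum>i<p. f i * y $ i)" if "y \<in> carrier_vec p" for f y
    using that by (simp add: scalar_prod_def atLeast0LessThan)
  have T_S: "vec p ` T = S"
  proof (intro subset_antisym subsetI)
    fix x assume "x \<in> vec p ` T"
    then obtain f where f: "f \<in> T" "x = vec p f" by blast
    then show "x \<in> S"
      using Y sprod_vec[of "vec p f" f] sprod_vec[of _ f]
      unfolding S_def T_def vec_module.orthogonal_complement_def by auto
  next
    fix x assume x: "x \<in> S"
    define f where "f i = (if i < p then x $ i else 0)" for i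
    have xc: "x \<in> carrier_vec p"
      using x unfolding S_def vec_module.orthogonal_complement_def by auto
    have fx: "vec p f = x" using xc unfolding f_def by auto
    have "f \<in> T"
      using x Y sprod_vec[of x f] sprod_vec[of _ f] xc
      unfolding S_def T_def vec_module.orthogonal_complement_def fx by (auto simp: f_def subset_iff)
    then show "x \<in> vec p ` T" using fx by blast
  qed
  have "compact T"
    unfolding T_def
    by (intro compact_Int_closed compact_fun_unit_sphere closed_Collect_all closed_Collect_imp
        closed_Collect_eq continuous_intros) auto
  moreover have "T \<noteq> {}" using S T_S by auto
  moreover have "continuous_on T g"
    unfolding g_def by (intro continuous_intros)
  ultimately obtain f where "f \<in> T" "\<forall>h\<in>T. g h \<le> g f"
    using continuous_attains_sup by blast
  then show ?thesis unfolding T_S[symmetric] g by blast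
qed

lemma rayleigh_attains_extremum:
  fixes B :: "real mat" and Y :: "real vec set" and \<sigma> :: real and p q :: nat
  defines "C \<equiv> vec_module.orthogonal_complement p Y"
  assumes B: "B \<in> carrier_mat q p" and Y: "Y \<subseteq> carrier_vec p"
    and x0: "x0 \<in> C" "x0 \<noteq> 0\<^sub>v p"
  shows "\<exists>x\<in>C. x \<bullet> x = 1 \<and>
     (\<forall>y\<in>C. \<sigma> * ((B *\<^sub>v y) \<bullet> (B *\<^sub>v y)) \<le> \<sigma> * (((B *\<^sub>v x) \<bullet> (B *\<^sub>v x)) * (y \<bullet> y)))"
proof -
  define f where "f v = (B *\<^sub>v v) \<bullet> (B *\<^sub>v v)" for v
  have Cc: "C \<subseteq> carrier_vec p" unfolding C_def vec_module.orthogonal_complement_def by auto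
  have normalize: "(1 / sqrt (v \<bullet> v)) \<cdot>\<^sub>v v \<in> C \<and> ((1 / sqrt (v \<bullet> v)) \<cdot>\<^sub>v v) \<bullet> ((1 / sqrt (v \<bullet> v)) \<cdot>\<^sub>v v) = 1"
    if v: "v \<in> C" "v \<noteq> 0\<^sub>v p" for v
  proof -
    have vc: "v \<in> carrier_vec p" using v Cc by auto
    have "v \<bullet> v > 0" using scalar_prod_self_pos[OF vc v(2)] .
    then show ?thesis using vc orthogonal_complement_smult[OF Y v(1)[unfolded C_def]]
      unfolding C_def by (simp add: field_simps)
  qed
  obtain x where x: "x \<in> C" "x \<bullet> x = 1" and max: "\<forall>y\<in>C. y \<bullet> y = 1 \<longrightarrow> \<sigma> * f y \<le> \<sigma> * f x"
    using rayleigh_attains_extremum_unit[OF B Y, of \<sigma>] normalize[OF x0]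
    unfolding C_def[symmetric] f_def by blast
  have "\<sigma> * f y \<le> \<sigma> * (f x * (y \<bullet> y))" if y: "y \<in> C" for y
  proof (cases "y = 0\<^sub>v p")
    case True
    then show ?thesis unfolding f_def using mult_mat_vec_zero[OF B] by simp
  next
    case False
    have yc: "y \<in> carrier_vec p" using y Cc by auto
    have pos: "y \<bullet> y > 0" using scalar_prod_self_pos[OF yc False] .
    define c where "c = 1 / sqrt (y \<bullet> y)"
    have cc: "c * c = 1 / (y \<bullet> y)" unfolding c_def using pos by (simp add: field_simps)
    have "f (c \<cdot>\<^sub>v y) = c * c * f y" unfolding f_def using yc B by (simp add: mult_mat_vec[OF B])
    moreover have "\<sigma> * f (c \<cdot>\<^sub>v y) \<le> \<sigma> * f x"
      using max normalize[OF y False] unfolding c_def by blast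
    ultimately have "\<sigma> * f y / (y \<bullet> y) \<le> \<sigma> * f x" unfolding cc by simp
    then show ?thesis using pos by (simp add: divide_le_eq algebra_simps)
  qed
  then show ?thesis using x unfolding f_def by auto
qed

text \<open>First-order condition: the derivative at t = 0 of the quotient along x + t z, with
  z the residual of the eigen-equation, must vanish.\<close>
lemma rayleigh_extremum_is_eigenvector:
  fixes B :: "real mat" and Y :: "real vec set" and \<sigma> \<mu> :: real and p q :: nat
  defines "C \<equiv> vec_module.orthogonal_complement p Y"
  assumes B: "B \<in> carrier_mat q p" and Y: "Y \<subseteq> carrier_vec p"
    and inv: "\<forall>x\<in>C. B\<^sup>T *\<^sub>v (B *\<^sub>v x) \<in> C"
    and x: "x \<in> C" and fx: "(B *\<^sub>v x) \<bullet> (B *\<^sub>v x) = \<mu> * (x \<bullet> x)"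
    and ext: "\<forall>y\<in>C. \<sigma> * ((B *\<^sub>v y) \<bullet> (B *\<^sub>v y)) \<le> \<sigma> * (\<mu> * (y \<bullet> y))"
    and sig: "\<sigma> \<noteq> 0"
  shows "B\<^sup>T *\<^sub>v (B *\<^sub>v x) = \<mu> \<cdot>\<^sub>v x"
proof -
  have xc: "x \<in> carrier_vec p" using x unfolding C_def vec_module.orthogonal_complement_def by auto
  define z where "z = B\<^sup>T *\<^sub>v (B *\<^sub>v x) - \<mu> \<cdot>\<^sub>v x"
  have zC: "z \<in> C" unfolding z_def C_def
    using orthogonal_complement_minus[OF Y _ orthogonal_complement_smult[OF Y]] inv x by (auto simp: C_def)
  have zc: "z \<in> carrier_vec p" using zC unfolding C_def vec_module.orthogonal_complement_def by auto
  have Bx: "B *\<^sub>v x \<in> carrier_vec q" and Bz: "B *\<^sub>v z \<in> carrier_vec q" using B xc zc by auto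
  have key: "(B *\<^sub>v x) \<bullet> (B *\<^sub>v z) - \<mu> * (x \<bullet> z) = z \<bullet> z"
  proof -
    have "(B *\<^sub>v x) \<bullet> (B *\<^sub>v z) = (B\<^sup>T *\<^sub>v (B *\<^sub>v x)) \<bullet> z"
      using transpose_vec_mult_scalar[OF B zc Bx] by simp
    moreover have "z \<bullet> z = (B\<^sup>T *\<^sub>v (B *\<^sub>v x)) \<bullet> z - (\<mu> \<cdot>\<^sub>v x) \<bullet> z"
      unfolding z_def using B xc zc by (subst minus_scalar_prod_distrib[of _ p]) auto
    ultimately show ?thesis using xc zc by simp
  qed
  have "2 * t * (\<sigma> * (z \<bullet> z)) \<le> t * t * (\<sigma> * (\<mu> * (z \<bullet> z) - (B *\<^sub>v z) \<bullet> (B *\<^sub>v z)))" for t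
  proof -
    have "x + t \<cdot>\<^sub>v z \<in> C"
      using orthogonal_complement_add[OF Y _ orthogonal_complement_smult[OF Y]] x zC
      unfolding C_def by blast
    then have "\<sigma> * ((B *\<^sub>v (x + t \<cdot>\<^sub>v z)) \<bullet> (B *\<^sub>v (x + t \<cdot>\<^sub>v z)))
        \<le> \<sigma> * (\<mu> * ((x + t \<cdot>\<^sub>v z) \<bullet> (x + t \<cdot>\<^sub>v z)))"
      using ext by blast
    moreover have "B *\<^sub>v (x + t \<cdot>\<^sub>v z) = B *\<^sub>v x + t \<cdot>\<^sub>v (B *\<^sub>v z)"
      using B xc zc by (simp add: mult_add_distrib_mat_vec[OF B] mult_mat_vec[OF B])
    ultimately show ?thesis
      using fx key scalar_prod_add_smult_self[OF Bx Bz, of t] scalar_prod_add_smult_self[OF xc zc, of t]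
      by (simp add: algebra_simps)
  qed
  then have "\<sigma> * (z \<bullet> z) = 0" by (intro linear_coeff_eq_0_if_quadratic_bound) blast
  then have "z = 0\<^sub>v p" using sig scalar_prod_self_eq_0[OF zc] by simp
  then have zi: "z $ i = 0" if "i < p" for i using that by simp
  show ?thesis
  proof (rule eq_vecI)
    fix i assume "i < dim_vec (\<mu> \<cdot>\<^sub>v x)"
    then have i: "i < p" using xc by simp
    show "(B\<^sup>T *\<^sub>v (B *\<^sub>v x)) $ i = (\<mu> \<cdot>\<^sub>v x) $ i"
      using zi[OF i] i B xc unfolding z_def by simp
  qed (use B xc in simp)
qed

lemma rayleigh_extremal_eigenvector:
  fixes B :: "real mat" and Y :: "real vec set" and \<sigma> :: real and p q :: nat
  defines "C \<equiv> vec_module.orthogonal_complement p Y"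
  assumes B: "B \<in> carrier_mat q p" and Y: "Y \<subseteq> carrier_vec p"
    and x0: "x0 \<in> C" "x0 \<noteq> 0\<^sub>v p"
    and inv: "\<forall>x\<in>C. B\<^sup>T *\<^sub>v (B *\<^sub>v x) \<in> C"
    and sig: "\<sigma> \<noteq> 0"
  shows "\<exists>x\<in>C. x \<bullet> x = 1 \<and> B\<^sup>T *\<^sub>v (B *\<^sub>v x) = ((B *\<^sub>v x) \<bullet> (B *\<^sub>v x)) \<cdot>\<^sub>v x \<and>
     (\<forall>y\<in>C. \<sigma> * ((B *\<^sub>v y) \<bullet> (B *\<^sub>v y)) \<le> \<sigma> * (((B *\<^sub>v x) \<bullet> (B *\<^sub>v x)) * (y \<bullet> y)))"
proof -
  obtain x where x: "x \<in> C" "x \<bullet> x = 1"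
    "\<forall>y\<in>C. \<sigma> * ((B *\<^sub>v y) \<bullet> (B *\<^sub>v y)) \<le> \<sigma> * (((B *\<^sub>v x) \<bullet> (B *\<^sub>v x)) * (y \<bullet> y))"
    using rayleigh_attains_extremum[OF B Y x0[unfolded C_def], of \<sigma>] unfolding C_def by blast
  have "B\<^sup>T *\<^sub>v (B *\<^sub>v x) = ((B *\<^sub>v x) \<bullet> (B *\<^sub>v x)) \<cdot>\<^sub>v x"
    using rayleigh_extremum_is_eigenvector[OF B Y] inv x sig unfolding C_def by simp
  then show ?thesis using x by blast
qed

lemma eigenvalue_mult_transpose_swap:
  fixes B :: "real mat"
  assumes B: "B \<in> carrier_mat q p" and x: "x \<in> carrier_vec p" "x \<noteq> 0\<^sub>v p"
    and ev: "B\<^sup>T *\<^sub>v (B *\<^sub>v x) = \<mu> \<cdot>\<^sub>v x" and mu: "\<mu> \<noteq> 0"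
  shows "eigenvalue (B * B\<^sup>T) \<mu>"
proof -
  define y where "y = B *\<^sub>v x"
  have yc: "y \<in> carrier_vec q" unfolding y_def using B x by auto
  have "y \<noteq> 0\<^sub>v q"
  proof
    assume "y = 0\<^sub>v q"
    then have "\<mu> \<cdot>\<^sub>v x = 0\<^sub>v p" using ev mult_mat_vec_zero[of "B\<^sup>T" p q] B unfolding y_def by simp
    then show False using smult_vec_eq_0_imp[OF x(1)] mu x(2) by blast
  qed
  moreover have "(B * B\<^sup>T) *\<^sub>v y = \<mu> \<cdot>\<^sub>v y"
    using B yc ev x unfolding y_def by (simp add: assoc_mult_mat_vec[of _ q p _ q] mult_mat_vec)
  ultimately show ?thesis unfolding eigenvalue_def eigenvector_def using B yc by auto
qed

subsection \<open>Singular values\<close>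

lemma finite_eigenvalues:
  assumes "(M :: real mat) \<in> carrier_mat n n"
  shows "finite {e. eigenvalue M e}"
proof -
  have "char_poly M \<noteq> 0" using degree_monic_char_poly[OF assms] by auto
  then have "finite {x. poly (char_poly M) x = 0}" by (rule poly_roots_finite)
  then show ?thesis using eigenvalue_root_char_poly[OF assms] by simp
qed

lemma finite_nz_sing_vals: "finite (nz_sing_vals A)"
proof -
  have "nz_sing_vals A = sqrt ` {e. eigenvalue (A\<^sup>T * A) e \<and> e > 0}"
    unfolding nz_sing_vals_def by auto
  moreover have "A\<^sup>T * A \<in> carrier_mat (dim_col A) (dim_col A)" by auto
  ultimately show ?thesis
    using finite_eigenvalues by (auto intro: finite_imageI rev_finite_subset)
qed

lemma nz_sing_vals_pos: "s \<in> nz_sing_vals A \<Longrightarrow> s > 0"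
  unfolding nz_sing_vals_def by auto

lemma sqrt_eigenvalue_in_nz_sing_vals:
  "eigenvalue (A\<^sup>T * A) e \<Longrightarrow> e > 0 \<Longrightarrow> sqrt e \<in> nz_sing_vals A"
  unfolding nz_sing_vals_def by auto

lemma nz_sing_valsD: "s \<in> nz_sing_vals A \<Longrightarrow> eigenvalue (A\<^sup>T * A) (s * s) \<and> s > 0"
  unfolding nz_sing_vals_def by auto

lemma sig_max_ge: "s \<in> nz_sing_vals A \<Longrightarrow> s \<le> sig_max A"
  unfolding sig_max_def using finite_nz_sing_vals by auto

lemma sig_min_le: "s \<in> nz_sing_vals A \<Longrightarrow> sig_min A \<le> s"
  unfolding sig_min_def using finite_nz_sing_vals by auto

lemma sig_max_in: "nz_sing_vals A \<noteq> {} \<Longrightarrow> sig_max A \<in> nz_sing_vals A"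
  unfolding sig_max_def using finite_nz_sing_vals by auto

lemma sig_min_in: "nz_sing_vals A \<noteq> {} \<Longrightarrow> sig_min A \<in> nz_sing_vals A"
  unfolding sig_min_def using finite_nz_sing_vals by auto

lemma sig_min_pos: "nz_sing_vals A \<noteq> {} \<Longrightarrow> sig_min A > 0"
  using sig_min_in nz_sing_vals_pos by blast

lemma sig_max_pos: "nz_sing_vals A \<noteq> {} \<Longrightarrow> sig_max A > 0"
  using sig_max_in nz_sing_vals_pos by blast

lemma max_rayleigh_eigenvalue:
  fixes U :: "real mat"
  assumes U: "U \<in> carrier_mat d R" and w0: "w0 \<in> carrier_vec d" "U\<^sup>T *\<^sub>v w0 \<noteq> 0\<^sub>v R"
  shows "\<exists>\<mu>>0. eigenvalue (U\<^sup>T * U) \<mu> \<and>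
    (\<forall>w\<in>carrier_vec d. (U\<^sup>T *\<^sub>v w) \<bullet> (U\<^sup>T *\<^sub>v w) \<le> \<mu> * (w \<bullet> w))"
proof -
  have B: "U\<^sup>T \<in> carrier_mat R d" using U by auto
  have w0nz: "w0 \<noteq> 0\<^sub>v d" using w0 U mult_mat_vec_zero[of "U\<^sup>T" R d] by auto
  obtain x where x: "x \<in> carrier_vec d" "x \<bullet> x = 1"
    "U *\<^sub>v (U\<^sup>T *\<^sub>v x) = ((U\<^sup>T *\<^sub>v x) \<bullet> (U\<^sup>T *\<^sub>v x)) \<cdot>\<^sub>v x"
    and max: "\<forall>y\<in>carrier_vec d. (U\<^sup>T *\<^sub>v y) \<bullet> (U\<^sup>T *\<^sub>v y) \<le> ((U\<^sup>T *\<^sub>v x) \<bullet> (U\<^sup>T *\<^sub>v x)) * (y \<bullet> y)"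
    using rayleigh_extremal_eigenvector[OF B, of "{}" w0 1] w0 w0nz U
    by (auto simp: vec_module.orthogonal_complement_def)
  define \<mu> where "\<mu> = (U\<^sup>T *\<^sub>v x) \<bullet> (U\<^sup>T *\<^sub>v x)"
  have "0 < (U\<^sup>T *\<^sub>v w0) \<bullet> (U\<^sup>T *\<^sub>v w0)"
    using scalar_prod_self_pos[of "U\<^sup>T *\<^sub>v w0" R] w0 U by auto
  also have "\<dots> \<le> \<mu> * (w0 \<bullet> w0)" using max w0 unfolding \<mu>_def by auto
  finally have "\<mu> > 0" using scalar_prod_self_nonneg[of w0] by (simp add: zero_less_mult_iff)
  moreover have "x \<noteq> 0\<^sub>v d" using x(2) by auto
  then have "eigenvalue (U\<^sup>T * U) \<mu>"
    using eigenvalue_mult_transpose_swap[OF B x(1)] x(3) \<open>\<mu> > 0\<close> unfolding \<mu>_def by auto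
  ultimately show ?thesis using max unfolding \<mu>_def by blast
qed

lemma nz_sing_vals_nonempty:
  fixes U :: "real mat"
  assumes "U \<in> carrier_mat d R" "w0 \<in> carrier_vec d" "U\<^sup>T *\<^sub>v w0 \<noteq> 0\<^sub>v R"
  shows "nz_sing_vals U \<noteq> {}"
  using max_rayleigh_eigenvalue[OF assms] sqrt_eigenvalue_in_nz_sing_vals by blast

text \<open>Unconditional: if U is zero the left side vanishes, whatever the junk value of sig_max.\<close>
lemma transpose_norm_le_sig_max:
  fixes U :: "real mat"
  assumes U: "U \<in> carrier_mat d R" and w: "w \<in> carrier_vec d"
  shows "(U\<^sup>T *\<^sub>v w) \<bullet> (U\<^sup>T *\<^sub>v w) \<le> (sig_max U)^2 * (w \<bullet> w)"
proof (cases "\<exists>w0\<in>carrier_vec d. U\<^sup>T *\<^sub>v w0 \<noteq> 0\<^sub>v R")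
  case True
  then obtain \<mu> where \<mu>: "\<mu> > 0" "eigenvalue (U\<^sup>T * U) \<mu>"
    and bound: "\<forall>w\<in>carrier_vec d. (U\<^sup>T *\<^sub>v w) \<bullet> (U\<^sup>T *\<^sub>v w) \<le> \<mu> * (w \<bullet> w)"
    using max_rayleigh_eigenvalue[OF U] by blast
  have "sqrt \<mu> \<le> sig_max U" using sig_max_ge[OF sqrt_eigenvalue_in_nz_sing_vals[OF \<mu>(2,1)]] .
  then have "(sqrt \<mu>)^2 \<le> (sig_max U)^2" using \<mu>(1) by (intro power_mono) auto
  then have "\<mu> * (w \<bullet> w) \<le> (sig_max U)^2 * (w \<bullet> w)"
    using \<mu>(1) scalar_prod_self_nonneg[of w] by (simp add: mult_right_mono)
  then show ?thesis using bound w by (meson order.trans)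
next
  case False
  then show ?thesis using w scalar_prod_self_nonneg[of w] by simp
qed

lemma range_orthogonal_to_kernel_transpose:
  fixes U :: "real mat"
  assumes U: "U \<in> carrier_mat d R" and v: "v \<in> carrier_vec R"
  shows "U *\<^sub>v v \<in> vec_module.orthogonal_complement d {y \<in> carrier_vec d. U\<^sup>T *\<^sub>v y = 0\<^sub>v R}"
proof -
  have "(U *\<^sub>v v) \<bullet> y = 0" if "y \<in> carrier_vec d" "U\<^sup>T *\<^sub>v y = 0\<^sub>v R" for y
  proof -
    have "(U\<^sup>T *\<^sub>v y) \<bullet> v = y \<bullet> (U *\<^sub>v v)" by (rule transpose_vec_mult_scalar[OF U v that(1)])
    then show ?thesis using that v U comm_scalar_prod[of y d "U *\<^sub>v v"] by auto
  qed
  then show ?thesis unfolding vec_module.orthogonal_complement_def using U v by auto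
qed

text \<open>On the range of U, the Rayleigh quotient of U U^T is minimized over the orthogonal
  complement of the kernel of U^T, which is invariant under U U^T.\<close>
lemma range_norm_le_sig_min:
  fixes U :: "real mat"
  assumes U: "U \<in> carrier_mat d R" and z: "z \<in> carrier_vec R"
  shows "(sig_min U)^2 * ((U *\<^sub>v z) \<bullet> (U *\<^sub>v z)) \<le> (U\<^sup>T *\<^sub>v (U *\<^sub>v z)) \<bullet> (U\<^sup>T *\<^sub>v (U *\<^sub>v z))"
proof (cases "U *\<^sub>v z = 0\<^sub>v d")
  case True
  then show ?thesis using U mult_mat_vec_zero[of "U\<^sup>T" R d] by simp
next
  case False
  have B: "U\<^sup>T \<in> carrier_mat R d" using U by auto
  define Y where "Y = {y \<in> carrier_vec d. U\<^sup>T *\<^sub>v y = 0\<^sub>v R}"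
  define C where "C = vec_module.orthogonal_complement d Y"
  have Y: "Y \<subseteq> carrier_vec d" unfolding Y_def by auto
  have range: "U *\<^sub>v v \<in> C" if "v \<in> carrier_vec R" for v
    unfolding C_def Y_def by (rule range_orthogonal_to_kernel_transpose[OF U that])
  have inv: "\<forall>x\<in>C. U\<^sup>T\<^sup>T *\<^sub>v (U\<^sup>T *\<^sub>v x) \<in> C"
    using range U unfolding C_def vec_module.orthogonal_complement_def by auto
  obtain x where x: "x \<in> C" "x \<bullet> x = 1"
    "U *\<^sub>v (U\<^sup>T *\<^sub>v x) = ((U\<^sup>T *\<^sub>v x) \<bullet> (U\<^sup>T *\<^sub>v x)) \<cdot>\<^sub>v x"
    and min: "\<forall>y\<in>C. -1 * ((U\<^sup>T *\<^sub>v y) \<bullet> (U\<^sup>T *\<^sub>v y)) \<le> -1 * (((U\<^sup>T *\<^sub>v x) \<bullet> (U\<^sup>T *\<^sub>v x)) * (y \<bullet> y))"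
    using rayleigh_extremal_eigenvector[OF B Y range[OF z, unfolded C_def] False, of "-1"] inv
    unfolding C_def by auto
  have xc: "x \<in> carrier_vec d"
    using x(1) unfolding C_def vec_module.orthogonal_complement_def by auto
  define \<mu> where "\<mu> = (U\<^sup>T *\<^sub>v x) \<bullet> (U\<^sup>T *\<^sub>v x)"
  have "U\<^sup>T *\<^sub>v x \<noteq> 0\<^sub>v R"
  proof
    assume "U\<^sup>T *\<^sub>v x = 0\<^sub>v R"
    then have "x \<in> Y" unfolding Y_def using xc by auto
    then show False using x(1,2) unfolding C_def vec_module.orthogonal_complement_def by auto
  qed
  then have \<mu>_pos: "\<mu> > 0" unfolding \<mu>_def using scalar_prod_self_pos[of "U\<^sup>T *\<^sub>v x" R] U xc by auto
  have "x \<noteq> 0\<^sub>v d" using x(2) by auto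
  then have "eigenvalue (U\<^sup>T * U) \<mu>"
    using eigenvalue_mult_transpose_swap[OF B xc] x(3) \<mu>_pos unfolding \<mu>_def by auto
  then have mem: "sqrt \<mu> \<in> nz_sing_vals U" using \<mu>_pos by (rule sqrt_eigenvalue_in_nz_sing_vals)
  have "0 < sig_min U" using mem sig_min_pos by blast
  then have "(sig_min U)^2 \<le> (sqrt \<mu>)^2" using sig_min_le[OF mem] by (intro power_mono) auto
  then have "(sig_min U)^2 \<le> \<mu>" using \<mu>_pos by simp
  then have "(sig_min U)^2 * ((U *\<^sub>v z) \<bullet> (U *\<^sub>v z)) \<le> \<mu> * ((U *\<^sub>v z) \<bullet> (U *\<^sub>v z))"
    using scalar_prod_self_nonneg by (rule mult_right_mono)
  also have "\<dots> \<le> (U\<^sup>T *\<^sub>v (U *\<^sub>v z)) \<bullet> (U\<^sup>T *\<^sub>v (U *\<^sub>v z))"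
    using min range[OF z] unfolding \<mu>_def by force
  finally show ?thesis .
qed

lemma diagonal_mat_transpose:
  fixes S :: "real mat"
  assumes "S \<in> carrier_mat r r" "diagonal_mat S"
  shows "S\<^sup>T = S"
  using assms unfolding diagonal_mat_def by (intro eq_matI) (auto, metis)

lemma diagonal_mat_square_index:
  fixes S :: "real mat"
  assumes S: "S \<in> carrier_mat r r" "diagonal_mat S" and i: "i < r" and j: "j < r"
  shows "(S * S) $$ (i,j) = (if i = j then S $$ (i,i) * S $$ (i,i) else 0)"
proof -
  have "(S * S) $$ (i,j) = (\<Sum>l=0..<r. S $$ (i,l) * S $$ (l,j))"
    using S i j by (simp add: scalar_prod_def)
  also have "\<dots> = (\<Sum>l=0..<r. if l = i then S $$ (i,i) * S $$ (i,j) else 0)"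
    using S i j unfolding diagonal_mat_def by (intro sum.cong) auto
  also have "\<dots> = S $$ (i,i) * S $$ (i,j)" using i by simp
  finally show ?thesis using S i j unfolding diagonal_mat_def by auto
qed

lemma transpose_svd:
  fixes U S V :: "real mat"
  assumes U: "U \<in> carrier_mat d r" and S: "S \<in> carrier_mat r r" and V: "V \<in> carrier_mat e r"
  shows "(U * S * V\<^sup>T)\<^sup>T = V * S\<^sup>T * U\<^sup>T"
proof -
  have US: "U * S \<in> carrier_mat d r" using U S by auto
  have "(U * S * V\<^sup>T)\<^sup>T = (V\<^sup>T)\<^sup>T * (U * S)\<^sup>T" by (rule transpose_mult[OF US]) (use V in auto)
  also have "(U * S)\<^sup>T = S\<^sup>T * U\<^sup>T" by (rule transpose_mult[OF U S])
  also have "V\<^sup>T\<^sup>T * (S\<^sup>T * U\<^sup>T) = V * S\<^sup>T * U\<^sup>T"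
    by (simp, rule assoc_mult_mat[symmetric]) (use U S V in auto)
  finally show ?thesis .
qed

lemma gram_svd:
  fixes U S V :: "real mat"
  assumes U: "U \<in> carrier_mat d r" and S: "S \<in> carrier_mat r r" and V: "V \<in> carrier_mat e r"
    and VV: "V\<^sup>T * V = 1\<^sub>m r"
  shows "(U * S * V\<^sup>T) * (U * S * V\<^sup>T)\<^sup>T = U * (S * S\<^sup>T) * U\<^sup>T"
proof -
  have US: "U * S \<in> carrier_mat d r" using U S by auto
  have t: "(U * S * V\<^sup>T)\<^sup>T = V * (S\<^sup>T * U\<^sup>T)"
  proof -
    have "(U * S * V\<^sup>T)\<^sup>T = (V\<^sup>T)\<^sup>T * (U * S)\<^sup>T" by (rule transpose_mult[OF US]) (use V in auto)
    also have "(U * S)\<^sup>T = S\<^sup>T * U\<^sup>T" by (rule transpose_mult[OF U S])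
    finally show ?thesis by simp
  qed
  have "(U * S * V\<^sup>T) * (V * (S\<^sup>T * U\<^sup>T)) = (U * S) * (V\<^sup>T * (V * (S\<^sup>T * U\<^sup>T)))"
    by (rule assoc_mult_mat[OF US]) (use V U S in auto)
  also have "V\<^sup>T * (V * (S\<^sup>T * U\<^sup>T)) = (V\<^sup>T * V) * (S\<^sup>T * U\<^sup>T)"
    by (rule assoc_mult_mat[symmetric]) (use V U S in auto)
  also have "\<dots> = S\<^sup>T * U\<^sup>T" unfolding VV by (rule left_mult_one_mat) (use U S in auto)
  also have "(U * S) * (S\<^sup>T * U\<^sup>T) = U * (S * (S\<^sup>T * U\<^sup>T))"
    by (rule assoc_mult_mat) (use U S in auto)
  also have "S * (S\<^sup>T * U\<^sup>T) = (S * S\<^sup>T) * U\<^sup>T"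
    by (rule assoc_mult_mat[symmetric]) (use U S in auto)
  also have "U * ((S * S\<^sup>T) * U\<^sup>T) = U * (S * S\<^sup>T) * U\<^sup>T"
    by (rule assoc_mult_mat[symmetric]) (use U S in auto)
  finally show ?thesis unfolding t .
qed

lemma diag_entry_in_nz_sing_vals:
  fixes U S V :: "real mat"
  assumes U: "U \<in> carrier_mat d r" and S: "S \<in> carrier_mat r r" "diagonal_mat S"
    and V: "V \<in> carrier_mat e r" and UU: "U\<^sup>T * U = 1\<^sub>m r" and VV: "V\<^sup>T * V = 1\<^sub>m r"
    and i: "i < r" and pos: "S $$ (i,i) > 0"
  shows "S $$ (i,i) \<in> nz_sing_vals (U * S * V\<^sup>T)"
proof -
  let ?M = "U * S * V\<^sup>T" and ?e = "S $$ (i,i) * S $$ (i,i)"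
  have ST: "S\<^sup>T = S" by (rule diagonal_mat_transpose[OF S])
  have "?M\<^sup>T * ?M = ?M\<^sup>T * (?M\<^sup>T)\<^sup>T" by simp
  also have "\<dots> = V * (S * S) * V\<^sup>T"
    unfolding transpose_svd[OF U S(1) V] ST using gram_svd[OF V S(1) U UU] ST by simp
  finally have G: "?M\<^sup>T * ?M = V * (S * S) * V\<^sup>T" .
  define x where "x = V *\<^sub>v unit_vec r i"
  have xc: "x \<in> carrier_vec e" unfolding x_def using V by auto
  have VTx: "V\<^sup>T *\<^sub>v x = unit_vec r i" unfolding x_def
    using assoc_mult_mat_vec[of "V\<^sup>T" r e V r "unit_vec r i"] V VV by simp
  have SSu: "(S * S) *\<^sub>v unit_vec r i = ?e \<cdot>\<^sub>v unit_vec r i"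
    using mult_mat_vec_unit_vec[of "S * S" r r i] diagonal_mat_square_index[OF S _ i] S i
    by (intro eq_vecI) auto
  have "(?M\<^sup>T * ?M) *\<^sub>v x = (V * (S * S)) *\<^sub>v (V\<^sup>T *\<^sub>v x)" unfolding G
    using assoc_mult_mat_vec[of "V * (S * S)" e r "V\<^sup>T" e x] V S xc by simp
  also have "\<dots> = V *\<^sub>v ((S * S) *\<^sub>v unit_vec r i)" unfolding VTx
    using assoc_mult_mat_vec[of V e r "S * S" r "unit_vec r i"] V S by simp
  also have "\<dots> = ?e \<cdot>\<^sub>v x" unfolding SSu x_def using V by (simp add: mult_mat_vec)
  finally have ev: "(?M\<^sup>T * ?M) *\<^sub>v x = ?e \<cdot>\<^sub>v x" .
  have "x \<noteq> 0\<^sub>v e"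
  proof
    assume "x = 0\<^sub>v e"
    then have "V\<^sup>T *\<^sub>v x = 0\<^sub>v r" using V mult_mat_vec_zero[of "V\<^sup>T" r e] by simp
    then show False using VTx i by (metis index_unit_vec(1) index_zero_vec(1) zero_neq_one)
  qed
  then have "eigenvalue (?M\<^sup>T * ?M) ?e"
    unfolding eigenvalue_def eigenvector_def using xc ev U S V by auto
  then have "sqrt ?e \<in> nz_sing_vals ?M" using pos by (intro sqrt_eigenvalue_in_nz_sing_vals) auto
  then show ?thesis using pos by simp
qed

subsection \<open>Condition numbers from Gram factorizations\<close>

lemma quadratic_form_diagonal:
  fixes D :: "real mat"
  assumes D: "D \<in> carrier_mat R R" "diagonal_mat D" and y: "y \<in> carrier_vec R"
  shows "y \<bullet> (D *\<^sub>v y) = (\<Sum>j<R. D $$ (j,j) * (y $ j * y $ j))"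
proof -
  have "(D *\<^sub>v y) $ i = D $$ (i,i) * y $ i" if i: "i < R" for i
  proof -
    have "(D *\<^sub>v y) $ i = (\<Sum>j=0..<R. D $$ (i,j) * y $ j)"
      using D i y by (simp add: scalar_prod_def)
    also have "\<dots> = (\<Sum>j=0..<R. if j = i then D $$ (i,i) * y $ i else 0)"
      using D i unfolding diagonal_mat_def by (intro sum.cong) auto
    finally show ?thesis using i by simp
  qed
  then show ?thesis using D y by (simp add: scalar_prod_def atLeast0LessThan algebra_simps)
qed

lemma quadratic_form_diagonal_bounds:
  fixes D :: "real mat"
  assumes D: "D \<in> carrier_mat R R" "diagonal_mat D" and y: "y \<in> carrier_vec R"
    and bounds: "\<forall>j<R. lo \<le> D $$ (j,j) \<and> D $$ (j,j) \<le> hi"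
  shows "lo * (y \<bullet> y) \<le> y \<bullet> (D *\<^sub>v y)" "y \<bullet> (D *\<^sub>v y) \<le> hi * (y \<bullet> y)"
  unfolding quadratic_form_diagonal[OF D y] scalar_prod_self_eq_sum[OF y] sum_distrib_left
  using bounds by (auto intro!: sum_mono mult_right_mono)

text \<open>s^2 is an eigenvalue of A A^T = U D U^T, whose eigenvector w = U z lies in the range of U;
  testing the eigen-equation against w gives s^2 |w|^2 = y^T D y with y = U^T w.\<close>
lemma sing_val_sq_between_of_gram:
  fixes A U D :: "real mat"
  assumes A: "A \<in> carrier_mat d N" and U: "U \<in> carrier_mat d R"
    and D: "D \<in> carrier_mat R R" "diagonal_mat D"
    and bounds: "\<forall>j<R. lo \<le> D $$ (j,j) \<and> D $$ (j,j) \<le> hi"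
    and gram: "A * A\<^sup>T = U * D * U\<^sup>T"
    and s: "s \<in> nz_sing_vals A"
  shows "\<exists>z\<in>carrier_vec R. U *\<^sub>v z \<noteq> 0\<^sub>v d \<and>
     lo * ((U\<^sup>T *\<^sub>v (U *\<^sub>v z)) \<bullet> (U\<^sup>T *\<^sub>v (U *\<^sub>v z))) \<le> s^2 * ((U *\<^sub>v z) \<bullet> (U *\<^sub>v z)) \<and>
     s^2 * ((U *\<^sub>v z) \<bullet> (U *\<^sub>v z)) \<le> hi * ((U\<^sup>T *\<^sub>v (U *\<^sub>v z)) \<bullet> (U\<^sup>T *\<^sub>v (U *\<^sub>v z)))"
proof -
  define e where "e = s * s"
  have e: "eigenvalue (A\<^sup>T * A) e" "e > 0" using nz_sing_valsD[OF s] unfolding e_def by auto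
  then obtain v where "eigenvector (A\<^sup>T * A) v e" unfolding eigenvalue_def by blast
  then have v: "v \<in> carrier_vec N" "v \<noteq> 0\<^sub>v N" "(A\<^sup>T * A) *\<^sub>v v = e \<cdot>\<^sub>v v"
    using A unfolding eigenvector_def by auto
  define w where "w = A *\<^sub>v v"
  have wc: "w \<in> carrier_vec d" unfolding w_def using A v by auto
  have ATw: "A\<^sup>T *\<^sub>v w = e \<cdot>\<^sub>v v" unfolding w_def using v A
    using assoc_mult_mat_vec[of "A\<^sup>T" N d A N v] by simp
  have wnz: "w \<noteq> 0\<^sub>v d"
  proof
    assume "w = 0\<^sub>v d"
    then have "e \<cdot>\<^sub>v v = 0\<^sub>v N" using ATw A mult_mat_vec_zero[of "A\<^sup>T" N d] by simp
    then show False using smult_vec_eq_0_imp[OF v(1)] e(2) v(2) by auto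
  qed
  define y where "y = U\<^sup>T *\<^sub>v w"
  have yc: "y \<in> carrier_vec R" unfolding y_def using U wc by auto
  have UDy: "U *\<^sub>v (D *\<^sub>v y) = e \<cdot>\<^sub>v w"
  proof -
    have "U *\<^sub>v (D *\<^sub>v y) = (A * A\<^sup>T) *\<^sub>v w"
      unfolding gram y_def using assoc_mult_mat_vec[of "U * D" d R "U\<^sup>T" d w]
        assoc_mult_mat_vec[of U d R D R "U\<^sup>T *\<^sub>v w"] U D wc by simp
    also have "\<dots> = A *\<^sub>v (A\<^sup>T *\<^sub>v w)" using assoc_mult_mat_vec[of A d N "A\<^sup>T" d w] A wc by simp
    also have "\<dots> = e \<cdot>\<^sub>v w" unfolding ATw w_def using A v by (simp add: mult_mat_vec)
    finally show ?thesis .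
  qed
  define z where "z = (1 / e) \<cdot>\<^sub>v (D *\<^sub>v y)"
  have zc: "z \<in> carrier_vec R" unfolding z_def using D yc by auto
  have Uz: "U *\<^sub>v z = w"
    unfolding z_def using U D yc UDy e(2) by (simp add: mult_mat_vec smult_smult_assoc)
  have "y \<bullet> (D *\<^sub>v y) = w \<bullet> (U *\<^sub>v (D *\<^sub>v y))"
    unfolding y_def
      using transpose_vec_mult_scalar[OF U, of "D *\<^sub>v y" w] D yc wc by (simp add: y_def)
  also have "\<dots> = e * (w \<bullet> w)" unfolding UDy using wc by simp
  finally have quad: "y \<bullet> (D *\<^sub>v y) = e * (w \<bullet> w)" .
  have "lo * (y \<bullet> y) \<le> e * (w \<bullet> w)" "e * (w \<bullet> w) \<le> hi * (y \<bullet> y)"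
    using quadratic_form_diagonal_bounds[OF D yc bounds] unfolding quad by auto
  then show ?thesis
    using zc wnz unfolding Uz[symmetric] y_def e_def power2_eq_square by (intro bexI[of _ z]) auto
qed

lemma sing_val_sq_bounds_of_gram:
  fixes A U D :: "real mat"
  assumes A: "A \<in> carrier_mat d N" and U: "U \<in> carrier_mat d R"
    and D: "D \<in> carrier_mat R R" "diagonal_mat D"
    and bounds: "\<forall>j<R. lo \<le> D $$ (j,j) \<and> D $$ (j,j) \<le> hi" and lo: "lo > 0"
    and gram: "A * A\<^sup>T = U * D * U\<^sup>T"
    and range_bounds: "\<And>z. z \<in> carrier_vec R \<Longrightarrow>
        c1 * ((U *\<^sub>v z) \<bullet> (U *\<^sub>v z)) \<le> (U\<^sup>T *\<^sub>v (U *\<^sub>v z)) \<bullet> (U\<^sup>T *\<^sub>v (U *\<^sub>v z)) \<and>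
        (U\<^sup>T *\<^sub>v (U *\<^sub>v z)) \<bullet> (U\<^sup>T *\<^sub>v (U *\<^sub>v z)) \<le> c2 * ((U *\<^sub>v z) \<bullet> (U *\<^sub>v z))"
    and s: "s \<in> nz_sing_vals A"
  shows "lo * c1 \<le> s^2 \<and> s^2 \<le> hi * c2"
proof -
  obtain z where z: "z \<in> carrier_vec R" "U *\<^sub>v z \<noteq> 0\<^sub>v d"
    and lo_s: "lo * ((U\<^sup>T *\<^sub>v (U *\<^sub>v z)) \<bullet> (U\<^sup>T *\<^sub>v (U *\<^sub>v z))) \<le> s^2 * ((U *\<^sub>v z) \<bullet> (U *\<^sub>v z))"
    and s_hi: "s^2 * ((U *\<^sub>v z) \<bullet> (U *\<^sub>v z)) \<le> hi * ((U\<^sup>T *\<^sub>v (U *\<^sub>v z)) \<bullet> (U\<^sup>T *\<^sub>v (U *\<^sub>v z)))"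
    using sing_val_sq_between_of_gram[OF A U D bounds gram s] by blast
  define w where "w = (U *\<^sub>v z) \<bullet> (U *\<^sub>v z)"
  define q where "q = (U\<^sup>T *\<^sub>v (U *\<^sub>v z)) \<bullet> (U\<^sup>T *\<^sub>v (U *\<^sub>v z))"
  have w_pos: "w > 0" unfolding w_def using scalar_prod_self_pos[of "U *\<^sub>v z" d] z U by auto
  have q: "c1 * w \<le> q" "q \<le> c2 * w" using range_bounds[OF z(1)] unfolding w_def q_def by auto
  have "0 < s^2 * w" using w_pos nz_sing_vals_pos[OF s] by simp
  also have "\<dots> \<le> hi * q" using s_hi unfolding w_def q_def .
  finally have "hi * q > 0" .
  moreover have "q \<ge> 0" unfolding q_def by (rule scalar_prod_self_nonneg)
  ultimately have "hi > 0" by (auto simp: zero_less_mult_iff)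
  have "lo * (c1 * w) \<le> lo * q" using q(1) lo by simp
  then have "lo * c1 * w \<le> s^2 * w" using lo_s unfolding w_def q_def by (simp add: mult.assoc)
  moreover have "hi * q \<le> hi * (c2 * w)" using q(2) \<open>hi > 0\<close> by simp
  then have "s^2 * w \<le> hi * c2 * w" using s_hi unfolding w_def q_def by (simp add: mult.assoc)
  ultimately show ?thesis using w_pos by simp
qed

lemma nz_sing_vals_nonempty_of_gram:
  fixes A U D :: "real mat"
  assumes A: "A \<in> carrier_mat d N" and U: "U \<in> carrier_mat d R"
    and D: "D \<in> carrier_mat R R" "diagonal_mat D"
    and bounds: "\<forall>j<R. lo \<le> D $$ (j,j) \<and> D $$ (j,j) \<le> hi" and lo: "lo > 0"
    and gram: "A * A\<^sup>T = U * D * U\<^sup>T"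
    and w0: "w0 \<in> carrier_vec d" "U\<^sup>T *\<^sub>v w0 \<noteq> 0\<^sub>v R"
  shows "nz_sing_vals A \<noteq> {}"
proof -
  define y where "y = U\<^sup>T *\<^sub>v w0"
  have yc: "y \<in> carrier_vec R" unfolding y_def using U w0 by auto
  have "(A\<^sup>T *\<^sub>v w0) \<bullet> (A\<^sup>T *\<^sub>v w0) = w0 \<bullet> ((A * A\<^sup>T) *\<^sub>v w0)"
    using transpose_vec_mult_scalar[OF A, of "A\<^sup>T *\<^sub>v w0" w0] A w0
      assoc_mult_mat_vec[of A d N "A\<^sup>T" d w0] by auto
  also have "\<dots> = y \<bullet> (D *\<^sub>v y)"
    unfolding gram y_def using assoc_mult_mat_vec[of "U * D" d R "U\<^sup>T" d w0]
      assoc_mult_mat_vec[of U d R D R "U\<^sup>T *\<^sub>v w0"] transpose_vec_mult_scalar[OF U, of "D *\<^sub>v y" w0]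
      U D w0 yc by (simp add: y_def)
  finally have "lo * (y \<bullet> y) \<le> (A\<^sup>T *\<^sub>v w0) \<bullet> (A\<^sup>T *\<^sub>v w0)"
    using quadratic_form_diagonal_bounds(1)[OF D yc bounds] by simp
  moreover have "0 < lo * (y \<bullet> y)"
    using scalar_prod_self_pos[OF yc] w0(2) lo unfolding y_def by simp
  ultimately have "A\<^sup>T *\<^sub>v w0 \<noteq> 0\<^sub>v N" by auto
  then show ?thesis using nz_sing_vals_nonempty[OF A w0(1)] by blast
qed

lemma cond_num_le_of_sing_val_sq_bounds:
  assumes ne: "nz_sing_vals A \<noteq> {}" and a: "a > 0"
    and bounds: "\<And>s. s \<in> nz_sing_vals A \<Longrightarrow> a \<le> s^2 \<and> s^2 \<le> b"
  shows "cond_num A \<le> sqrt (b / a)"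
proof -
  have mx: "(sig_max A)^2 \<le> b" and mn: "a \<le> (sig_min A)^2"
    using bounds[OF sig_max_in[OF ne]] bounds[OF sig_min_in[OF ne]] by auto
  have "cond_num A = sqrt ((sig_max A)^2 / (sig_min A)^2)"
    unfolding cond_num_def using sig_min_pos[OF ne] sig_max_pos[OF ne] by (simp add: real_sqrt_divide)
  also have "\<dots> \<le> sqrt (b / a)"
    using mx mn a sig_min_pos[OF ne] order.trans[OF zero_le_power2 mx]
    by (intro real_sqrt_le_mono frac_le) auto
  finally show ?thesis .
qed

lemma cond_num_le_of_gram:
  fixes A U D :: "real mat"
  assumes A: "A \<in> carrier_mat d N" and U: "U \<in> carrier_mat d R"
    and D: "D \<in> carrier_mat R R" "diagonal_mat D"
    and bounds: "\<forall>j<R. lo \<le> D $$ (j,j) \<and> D $$ (j,j) \<le> hi" and lo: "lo > 0"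
    and gram: "A * A\<^sup>T = U * D * U\<^sup>T"
    and w0: "w0 \<in> carrier_vec d" "U\<^sup>T *\<^sub>v w0 \<noteq> 0\<^sub>v R"
    and c1: "c1 > 0"
    and range_bounds: "\<And>z. z \<in> carrier_vec R \<Longrightarrow>
        c1 * ((U *\<^sub>v z) \<bullet> (U *\<^sub>v z)) \<le> (U\<^sup>T *\<^sub>v (U *\<^sub>v z)) \<bullet> (U\<^sup>T *\<^sub>v (U *\<^sub>v z)) \<and>
        (U\<^sup>T *\<^sub>v (U *\<^sub>v z)) \<bullet> (U\<^sup>T *\<^sub>v (U *\<^sub>v z)) \<le> c2 * ((U *\<^sub>v z) \<bullet> (U *\<^sub>v z))"
  shows "cond_num A \<le> sqrt (hi * c2 / (lo * c1))"
  using nz_sing_vals_nonempty_of_gram[OF A U D bounds lo gram w0] lo c1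
    sing_val_sq_bounds_of_gram[OF A U D bounds lo gram range_bounds]
  by (intro cond_num_le_of_sing_val_sq_bounds) auto

subsection \<open>Block matrices\<close>

lemma blk_off_Suc: "blk_off r (Suc k) = blk_off r k + r k"
  unfolding blk_off_def by simp

lemma blk_off_mono: "k \<le> k' \<Longrightarrow> blk_off r k \<le> blk_off r k'"
  unfolding blk_off_def by (intro sum_mono2) auto

lemma blk_off_lt: "k < K \<Longrightarrow> i < r k \<Longrightarrow> blk_off r k + i < blk_off r K"
  using blk_off_mono[of "Suc k" K r] blk_off_Suc[of r k] by simp

lemma blk_of_blk_off_add:
  assumes "i < r k"
  shows "blk_of r (blk_off r k + i) = k"
  unfolding blk_of_def
proof (rule Least_equality)
  show "blk_off r k + i < blk_off r (Suc k)" using assms blk_off_Suc[of r k] by simp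
next
  fix k' assume "blk_off r k + i < blk_off r (Suc k')"
  then show "k \<le> k'" using blk_off_mono[of "Suc k'" k r] by (cases "Suc k' \<le> k") auto
qed

lemma sum_lessThan_add: "(\<Sum>j<(a::nat)+b. f j) = (\<Sum>j<a. f j) + (\<Sum>i<b. f (a + i))"
  by (induction b) (auto simp: add.assoc)

lemma sum_blk_off: "(\<Sum>j<blk_off r K. f j) = (\<Sum>k<K. \<Sum>i<r k. f (blk_off r k + i))"
proof (induction K)
  case 0
  then show ?case by (simp add: blk_off_def)
next
  case (Suc K)
  have "(\<Sum>j<blk_off r (Suc K). f j) = (\<Sum>j<blk_off r K + r K. f j)" by (simp add: blk_off_Suc)
  also have "\<dots> = (\<Sum>j<blk_off r K. f j) + (\<Sum>i<r K. f (blk_off r K + i))"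
    by (rule sum_lessThan_add)
  finally show ?case using Suc by simp
qed

lemma blk_off_decomp: "j < blk_off r K \<Longrightarrow> \<exists>k<K. \<exists>i<r k. j = blk_off r k + i"
proof (induction K)
  case 0 then show ?case by (simp add: blk_off_def)
next
  case (Suc K)
  show ?case
  proof (cases "j < blk_off r K")
    case True then show ?thesis using Suc.IH by (meson less_SucI)
  next
    case False
    then have "j - blk_off r K < r K" "j = blk_off r K + (j - blk_off r K)"
      using Suc.prems blk_off_Suc[of r K] by auto
    then show ?thesis by blast
  qed
qed

lemma hcat_carrier: "hcat d r K Us \<in> carrier_mat d (blk_off r K)"
  unfolding hcat_def by simp

lemma hcat_index:
  assumes "a < d" "k < K" "i < r k"
  shows "hcat d r K Us $$ (a, blk_off r k + i) = Us k $$ (a, i)"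
  using assms blk_off_lt[of k K i r] blk_of_blk_off_add[of i r k] unfolding hcat_def by simp

lemma block_diag_carrier: "block_diag r K Ds \<in> carrier_mat (blk_off r K) (blk_off r K)"
  unfolding block_diag_def by simp

lemma block_diag_index:
  assumes "k < K" "i < r k" "k' < K" "i' < r k'"
  shows "block_diag r K Ds $$ (blk_off r k + i, blk_off r k' + i')
    = (if k = k' then Ds k $$ (i,i') else 0)"
  using assms blk_off_lt[of k K i r] blk_off_lt[of k' K i' r]
    blk_of_blk_off_add[of i r k] blk_of_blk_off_add[of i' r k']
  unfolding block_diag_def by (cases "k = k'") simp_all

lemma index_mult_mult_transpose:
  fixes X Y Z :: "real mat"
  assumes X: "X \<in> carrier_mat d n" and Y: "Y \<in> carrier_mat n n" and Z: "Z \<in> carrier_mat d' n"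
    and a: "a < d" and b: "b < d'"
  shows "(X * Y * Z\<^sup>T) $$ (a,b) = (\<Sum>j<n. \<Sum>j'<n. X $$ (a,j') * Y $$ (j',j) * Z $$ (b,j))"
proof -
  have e: "(X * Y * Z\<^sup>T) $$ (a,b) = row (X * Y) a \<bullet> col Z\<^sup>T b"
    using X Y Z a b by (subst index_mult_mat) auto
  have "row (X * Y) a \<bullet> col Z\<^sup>T b = (\<Sum>j=0..<n. (X * Y) $$ (a,j) * Z $$ (b,j))"
    unfolding scalar_prod_def using X Y Z a b by (intro sum.cong) auto
  also have "\<dots> = (\<Sum>j<n. \<Sum>j'<n. X $$ (a,j') * Y $$ (j',j) * Z $$ (b,j))"
    unfolding atLeast0LessThan
  proof (intro sum.cong refl)
    fix j assume "j \<in> {..<n}"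
    then have "(X * Y) $$ (a,j) = (\<Sum>j'=0..<n. X $$ (a,j') * Y $$ (j',j))"
      using X Y a by (subst index_mult_mat) (auto simp: scalar_prod_def intro!: sum.cong)
    then show "(X * Y) $$ (a,j) * Z $$ (b,j) = (\<Sum>j'<n. X $$ (a,j') * Y $$ (j',j) * Z $$ (b,j))"
      by (simp add: atLeast0LessThan sum_distrib_right)
  qed
  finally show ?thesis using e by simp
qed

lemma hcat_block_diag_hcat_index:
  fixes Ws Ds :: "nat \<Rightarrow> real mat"
  assumes Ws: "\<forall>k<K. Ws k \<in> carrier_mat d (r k)" and Ds: "\<forall>k<K. Ds k \<in> carrier_mat (r k) (r k)"
    and a: "a < d" and b: "b < d"
  shows "(hcat d r K Ws * block_diag r K Ds * (hcat d r K Ws)\<^sup>T) $$ (a,b)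
       = (\<Sum>k<K. (Ws k * Ds k * (Ws k)\<^sup>T) $$ (a,b))"
proof -
  let ?U = "hcat d r K Ws" and ?D = "block_diag r K Ds" and ?R = "blk_off r K"
  have "(?U * ?D * ?U\<^sup>T) $$ (a,b) = (\<Sum>j<?R. \<Sum>j'<?R. ?U $$ (a,j') * ?D $$ (j',j) * ?U $$ (b,j))"
    by (rule index_mult_mult_transpose[OF hcat_carrier block_diag_carrier hcat_carrier a b])
  also have "\<dots> = (\<Sum>k<K. \<Sum>i<r k. \<Sum>k'<K. \<Sum>i'<r k'.
      ?U $$ (a, blk_off r k' + i') * ?D $$ (blk_off r k' + i', blk_off r k + i) * ?U $$ (b, blk_off r k + i))"
    unfolding sum_blk_off ..
  also have "\<dots> = (\<Sum>k<K. \<Sum>i<r k. \<Sum>k'<K. if k' = k then (\<Sum>i'<r k.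
      Ws k $$ (a, i') * Ds k $$ (i', i) * Ws k $$ (b, i)) else 0)"
  proof (intro sum.cong refl)
    fix k i k' assume k: "k \<in> {..<K}" and i: "i \<in> {..<r k}" and k': "k' \<in> {..<K}"
    show "(\<Sum>i'<r k'. ?U $$ (a, blk_off r k' + i') * ?D $$ (blk_off r k' + i', blk_off r k + i) * ?U $$ (b, blk_off r k + i))
      = (if k' = k then (\<Sum>i'<r k. Ws k $$ (a, i') * Ds k $$ (i', i) * Ws k $$ (b, i)) else 0)"
    proof (cases "k' = k")
      case True
      then show ?thesis using k i by (auto simp: hcat_index block_diag_index a b intro!: sum.cong)
    next
      case False
      then show ?thesis
        using k i k' by (auto simp: hcat_index block_diag_index a b intro!: sum.neutral)
    qed
  qed
  also have "\<dots> = (\<Sum>k<K. \<Sum>i<r k. \<Sum>i'<r k. Ws k $$ (a, i') * Ds k $$ (i', i) * Ws k $$ (b, i))"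
  proof (rule sum.cong[OF refl], rule sum.cong[OF refl])
    fix k i assume k: "k \<in> {..<K}"
    show "(\<Sum>k'<K. if k' = k then (\<Sum>i'<r k. Ws k $$ (a, i') * Ds k $$ (i', i) * Ws k $$ (b, i)) else 0)
      = (\<Sum>i'<r k. Ws k $$ (a, i') * Ds k $$ (i', i) * Ws k $$ (b, i))"
      using k by (subst sum.delta) auto
  qed
  also have "\<dots> = (\<Sum>k<K. (Ws k * Ds k * (Ws k)\<^sup>T) $$ (a,b))"
  proof (intro sum.cong refl)
    fix k assume "k \<in> {..<K}"
    then have k: "k < K" by simp
    show "(\<Sum>i<r k. \<Sum>i'<r k. Ws k $$ (a, i') * Ds k $$ (i', i) * Ws k $$ (b, i)) = (Ws k * Ds k * (Ws k)\<^sup>T) $$ (a,b)"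
      using index_mult_mult_transpose[of "Ws k" d "r k" "Ds k" "Ws k" d a b] Ws Ds k a b by simp
  qed
  finally show ?thesis .
qed

lemma col_hcat:
  assumes Ws: "Ws k \<in> carrier_mat d (r k)" and k: "k < K" and i: "i < r k"
  shows "col (hcat d r K Ws) (blk_off r k + i) = col (Ws k) i"
proof (rule eq_vecI)
  show "dim_vec (col (hcat d r K Ws) (blk_off r k + i)) = dim_vec (col (Ws k) i)"
    using Ws by (simp add: hcat_def)
  fix a assume "a < dim_vec (col (Ws k) i)"
  then have a: "a < d" using Ws by simp
  show "col (hcat d r K Ws) (blk_off r k + i) $ a = col (Ws k) i $ a"
    using hcat_index[of a d k K i r Ws] a Ws blk_off_lt[of k K i r] k i by (simp add: hcat_def)
qed

lemma diagonal_block_diag: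
  assumes Ds: "\<forall>k<K. Ds k \<in> carrier_mat (r k) (r k)" "\<forall>k<K. diagonal_mat (Ds k)"
  shows "diagonal_mat (block_diag r K Ds)"
  unfolding diagonal_mat_def
proof (intro allI impI)
  fix j j' assume "j < dim_row (block_diag r K Ds)" "j' < dim_col (block_diag r K Ds)" and ne: "j \<noteq> j'"
  then have "j < blk_off r K" "j' < blk_off r K" by (auto simp: block_diag_def)
  then obtain k i k' i' where ki: "k < K" "i < r k" "j = blk_off r k + i"
    and ki': "k' < K" "i' < r k'" "j' = blk_off r k' + i'"
    using blk_off_decomp by meson
  show "block_diag r K Ds $$ (j, j') = 0"
  proof (cases "k = k'")
    case True
    then have "i \<noteq> i'" using ne ki ki' by auto
    then show ?thesis
      using block_diag_index[of k K i r k' i' Ds] Ds ki ki' True unfolding diagonal_mat_def by auto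
  next
    case False
    then show ?thesis using block_diag_index[of k K i r k' i' Ds] ki ki' by simp
  qed
qed

lemma block_diag_diagonal_bounds:
  assumes bounds: "\<forall>k<K. \<forall>i<r k. lo \<le> Ds k $$ (i,i) \<and> Ds k $$ (i,i) \<le> hi"
  shows "\<forall>j<blk_off r K. lo \<le> block_diag r K Ds $$ (j,j) \<and> block_diag r K Ds $$ (j,j) \<le> hi"
proof (intro allI impI)
  fix j assume "j < blk_off r K"
  then obtain k i where ki: "k < K" "i < r k" "j = blk_off r k + i" using blk_off_decomp by meson
  then show "lo \<le> block_diag r K Ds $$ (j,j) \<and> block_diag r K Ds $$ (j,j) \<le> hi"
    using block_diag_index[of k K i r k i Ds] bounds by simp
qed

lemma col_orthonormal:
  fixes W :: "'a :: comm_ring_1 mat"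
  assumes W: "W \<in> carrier_mat d r" and WW: "W\<^sup>T * W = 1\<^sub>m r" and i: "i < r" and j: "j < r"
  shows "col W i \<bullet> col W j = (if i = j then 1 else 0)"
proof -
  have "(W\<^sup>T * W) $$ (i,j) = row W\<^sup>T i \<bullet> col W j" using W i j by (subst index_mult_mat) auto
  also have "row W\<^sup>T i = col W i" using W i by simp
  finally show ?thesis using WW i j by simp
qed

context vec_space
begin

lemma lin_indpt_orthonormal_cols:
  assumes W: "W \<in> carrier_mat n r0" and WW: "W\<^sup>T * W = 1\<^sub>m r0"
  shows "lin_indpt (set (cols W))" and "card (set (cols W)) = r0"
proof -
  define S0 where "S0 = set (cols W)"
  have S0: "S0 = col W ` {..<r0}" unfolding S0_def cols_def using W by auto
  have S0c: "S0 \<subseteq> carrier_vec n" unfolding S0 using W by auto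
  have ort: "col W i \<bullet> col W j = (if i = j then 1 else 0)" if "i < r0" "j < r0" for i j
    using col_orthonormal[OF W WW that] .
  have "col W i \<noteq> col W j" if "i < r0" "j < r0" "i \<noteq> j" for i j
    using ort[OF that(1,2)] ort[OF that(1,1)] that(3) by auto
  then have "inj_on (col W) {0..<r0}" unfolding inj_on_def by (metis atLeastLessThan_iff)
  then have "distinct (cols W)" unfolding cols_def using W by (simp add: distinct_map)
  then show "card (set (cols W)) = r0" using distinct_card W by fastforce
  show "lin_indpt (set (cols W))"
  proof
    assume "lin_dep (set (cols W))"
    then obtain u where u: "u \<in> S0" "u \<in> span (S0 - {u})"
      using lindep_span[OF S0c] unfolding S0_def by auto
    obtain i where i: "i < r0" "u = col W i" using u(1) unfolding S0 by auto
    have sub: "S0 - {u} \<subseteq> carrier_vec n" using S0c by auto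
    have "u \<in> orthogonal_complement (S0 - {u})"
      unfolding orthogonal_complement_def
    proof (intro CollectI conjI ballI)
      show "u \<in> carrier_vec n" using u(1) S0c by auto
      fix y assume y: "y \<in> S0 - {u}"
      then obtain j where j: "j < r0" "y = col W j" unfolding S0 by auto
      then have "i \<noteq> j" using y i by auto
      then show "u \<bullet> y = 0" using ort[OF i(1) j(1)] i j by simp
    qed
    then have "u \<in> orthogonal_complement (span (S0 - {u}))"
      using in_orthogonal_complement_span[OF sub] by simp
    then have "u \<bullet> u = 0" using u(2) unfolding orthogonal_complement_def by auto
    then show False using ort[OF i(1) i(1)] i by simp
  qed
qed

text \<open>A column of U outside the span of the first r0 (independent) columns would give r0 + 1
  independent columns, exceeding the rank.\<close>
lemma range_in_first_block_span:
  assumes W: "W \<in> carrier_mat n r0" and WW: "W\<^sup>T * W = 1\<^sub>m r0"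
    and U: "U \<in> carrier_mat n R" and r0R: "r0 \<le> R"
    and colsU: "\<forall>i<r0. col U i = col W i"
    and rk: "rank U = r0"
    and z: "z \<in> carrier_vec R"
  shows "\<exists>z'\<in>carrier_vec r0. U *\<^sub>v z = W *\<^sub>v z'"
proof -
  define S0 where "S0 = set (cols W)"
  have S0c: "S0 \<subseteq> carrier_vec n" unfolding S0_def cols_def using W by auto
  note indep = lin_indpt_orthonormal_cols(1)[OF W WW, folded S0_def]
  note card = lin_indpt_orthonormal_cols(2)[OF W WW, folded S0_def]
  have S0U: "S0 \<subseteq> set (cols U)"
  proof
    fix x assume "x \<in> S0"
    then obtain i where i: "i < r0" "x = col W i" unfolding S0_def cols_def using W by auto
    then have "x = col U i" using colsU by simp
    then show "x \<in> set (cols U)" using U i r0R unfolding cols_def by auto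
  qed
  have "set (cols U) \<subseteq> span S0"
  proof
    fix c assume c: "c \<in> set (cols U)"
    show "c \<in> span S0"
    proof (rule ccontr)
      assume nc: "c \<notin> span S0"
      have cc: "c \<in> carrier_vec n" using c U unfolding cols_def by auto
      have cnS: "c \<notin> S0" using nc span_mem[OF S0c] by blast
      have "lin_indpt (S0 \<union> {c})" using lin_dep_iff_in_span[OF S0c indep cc cnS] nc by simp
      moreover have "S0 \<union> {c} \<subseteq> set (cols U)" using S0U c by auto
      ultimately have "card (S0 \<union> {c}) \<le> rank U" using rank_ge_card_indpt[OF U] by blast
      moreover have "card (S0 \<union> {c}) = r0 + 1" using card cnS unfolding S0_def by simp
      ultimately show False using rk by simp
    qed
  qed
  then have "span (set (cols U)) \<subseteq> span S0"
    by (rule span_is_subset[OF _ span_is_submodule[OF S0c]])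
  moreover have "U *\<^sub>v z \<in> span (set (cols U))"
    using col_space_eq[OF U] U z unfolding col_space_def by auto
  ultimately have "U *\<^sub>v z \<in> col_space W" unfolding col_space_def S0_def by auto
  then obtain x where "x \<in> carrier_vec r0" "W *\<^sub>v x = U *\<^sub>v z" using col_space_eq[OF W] W by auto
  then show ?thesis by metis
qed

end

lemma hcat_transpose_nonzero:
  fixes Ws :: "nat \<Rightarrow> real mat"
  assumes K: "0 < K" and W0: "Ws 0 \<in> carrier_mat d (r 0)" and WW: "(Ws 0)\<^sup>T * Ws 0 = 1\<^sub>m (r 0)"
    and r0: "0 < r 0"
  shows "\<exists>w0\<in>carrier_vec d. (hcat d r K Ws)\<^sup>T *\<^sub>v w0 \<noteq> 0\<^sub>v (blk_off r K)"
proof -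
  let ?U = "hcat d r K Ws"
  define w0 where "w0 = col (Ws 0) 0"
  have w0c: "w0 \<in> carrier_vec d" unfolding w0_def using W0 by auto
  have R: "0 < blk_off r K" using blk_off_lt[of 0 K 0 r] K r0 by (simp add: blk_off_def)
  have c0: "col ?U 0 = col (Ws 0) 0"
    using col_hcat[of Ws 0 d r K 0] W0 K r0 by (simp add: blk_off_def)
  have "(?U\<^sup>T *\<^sub>v w0) $ 0 = col ?U 0 \<bullet> w0" using R hcat_carrier[of d r K Ws] by simp
  also have "\<dots> = 1" unfolding c0 w0_def using col_orthonormal[OF W0 WW, of 0 0] r0 by simp
  finally have "(?U\<^sup>T *\<^sub>v w0) $ 0 = 1" .
  then have "?U\<^sup>T *\<^sub>v w0 \<noteq> 0\<^sub>v (blk_off r K)" using R by auto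
  then show ?thesis using w0c by blast
qed

lemma hcat_transpose_norm:
  fixes Ws :: "nat \<Rightarrow> real mat"
  assumes Ws: "\<forall>k<K. Ws k \<in> carrier_mat d (r k)" and w: "w \<in> carrier_vec d"
  shows "((hcat d r K Ws)\<^sup>T *\<^sub>v w) \<bullet> ((hcat d r K Ws)\<^sup>T *\<^sub>v w)
     = (\<Sum>k<K. ((Ws k)\<^sup>T *\<^sub>v w) \<bullet> ((Ws k)\<^sup>T *\<^sub>v w))"
proof -
  let ?U = "hcat d r K Ws"
  have yc: "?U\<^sup>T *\<^sub>v w \<in> carrier_vec (blk_off r K)" using hcat_carrier[of d r K Ws] w by auto
  have coord: "(?U\<^sup>T *\<^sub>v w) $ (blk_off r k + i) = ((Ws k)\<^sup>T *\<^sub>v w) $ i" if k: "k < K" and i: "i < r k" for k i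
  proof -
    have "(?U\<^sup>T *\<^sub>v w) $ (blk_off r k + i) = col ?U (blk_off r k + i) \<bullet> w"
      using blk_off_lt[of k K i r] k i hcat_carrier[of d r K Ws] by simp
    also have "\<dots> = col (Ws k) i \<bullet> w" using col_hcat[of Ws k d r K i] Ws k i by simp
    also have "\<dots> = ((Ws k)\<^sup>T *\<^sub>v w) $ i" using Ws[rule_format, OF k] i by simp
    finally show ?thesis .
  qed
  have "(?U\<^sup>T *\<^sub>v w) \<bullet> (?U\<^sup>T *\<^sub>v w) = (\<Sum>k<K. \<Sum>i<r k. ((Ws k)\<^sup>T *\<^sub>v w) $ i * ((Ws k)\<^sup>T *\<^sub>v w) $ i)"
    unfolding scalar_prod_self_eq_sum[OF yc] sum_blk_off using coord by simp
  also have "\<dots> = (\<Sum>k<K. ((Ws k)\<^sup>T *\<^sub>v w) \<bullet> ((Ws k)\<^sup>T *\<^sub>v w))"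
  proof (intro sum.cong refl)
    fix k assume "k \<in> {..<K}"
    then have "(Ws k)\<^sup>T *\<^sub>v w \<in> carrier_vec (r k)" using Ws w by auto
    then show "(\<Sum>i<r k. ((Ws k)\<^sup>T *\<^sub>v w) $ i * ((Ws k)\<^sup>T *\<^sub>v w) $ i) = ((Ws k)\<^sup>T *\<^sub>v w) \<bullet> ((Ws k)\<^sup>T *\<^sub>v w)"
      using scalar_prod_self_eq_sum by simp
  qed
  finally show ?thesis .
qed

lemma orthonormal_transpose_norm_le:
  fixes W :: "real mat"
  assumes W: "W \<in> carrier_mat d r" and WW: "W\<^sup>T * W = 1\<^sub>m r" and w: "w \<in> carrier_vec d"
  shows "(W\<^sup>T *\<^sub>v w) \<bullet> (W\<^sup>T *\<^sub>v w) \<le> w \<bullet> w"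
proof -
  define t where "t = W\<^sup>T *\<^sub>v w"
  have tc: "t \<in> carrier_vec r" unfolding t_def using W w by auto
  define p where "p = W *\<^sub>v t"
  have pc: "p \<in> carrier_vec d" unfolding p_def using W tc by auto
  have wp: "w \<bullet> p = t \<bullet> t" unfolding p_def using transpose_vec_mult_scalar[OF W tc w] t_def by simp
  have WTp: "W\<^sup>T *\<^sub>v p = t"
    unfolding p_def using assoc_mult_mat_vec[of "W\<^sup>T" r d W r t] W tc WW by simp
  have pp: "p \<bullet> p = t \<bullet> t"
    using transpose_vec_mult_scalar[OF W tc pc] WTp unfolding p_def
    by (metis W comm_scalar_prod mult_mat_vec_carrier tc)
  have "0 \<le> (w - p) \<bullet> (w - p)" by (rule scalar_prod_self_nonneg)
  also have "(w - p) \<bullet> (w - p) = w \<bullet> w - 2 * (w \<bullet> p) + p \<bullet> p"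
    using w pc by (simp add: minus_scalar_prod_distrib[of _ d] scalar_prod_minus_distrib[of _ d]
        comm_scalar_prod[of p d w])
  finally show ?thesis unfolding t_def[symmetric] using wp pp by simp
qed

lemma orthonormal_isometry:
  fixes W :: "real mat"
  assumes W: "W \<in> carrier_mat d r" and WW: "W\<^sup>T * W = 1\<^sub>m r" and z: "z \<in> carrier_vec r"
  shows "(W\<^sup>T *\<^sub>v (W *\<^sub>v z)) \<bullet> (W\<^sup>T *\<^sub>v (W *\<^sub>v z)) = (W *\<^sub>v z) \<bullet> (W *\<^sub>v z)"
proof -
  have e: "W\<^sup>T *\<^sub>v (W *\<^sub>v z) = z" using assoc_mult_mat_vec[of "W\<^sup>T" r d W r z] W z WW by simp
  have "(W *\<^sub>v z) \<bullet> (W *\<^sub>v z) = (W\<^sup>T *\<^sub>v (W *\<^sub>v z)) \<bullet> z"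
    using transpose_vec_mult_scalar[OF W z, of "W *\<^sub>v z"] W z by simp
  then show ?thesis unfolding e by simp
qed

lemma hcat_orthonormal:
  fixes Ws :: "nat \<Rightarrow> real mat"
  assumes Ws: "\<forall>k<K. Ws k \<in> carrier_mat d (r k)" and WW: "\<forall>k<K. (Ws k)\<^sup>T * Ws k = 1\<^sub>m (r k)"
    and orth: "\<forall>k<K. \<forall>l<K. k \<noteq> l \<longrightarrow> (\<forall>x y. x \<in> carrier_vec (r k) \<longrightarrow> y \<in> carrier_vec (r l)
              \<longrightarrow> (Ws k *\<^sub>v x) \<bullet> (Ws l *\<^sub>v y) = 0)"
  shows "(hcat d r K Ws)\<^sup>T * hcat d r K Ws = 1\<^sub>m (blk_off r K)"
proof (rule eq_matI)
  let ?U = "hcat d r K Ws"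
  have U: "?U \<in> carrier_mat d (blk_off r K)" by (rule hcat_carrier)
  fix j j' assume "j < dim_row (1\<^sub>m (blk_off r K) :: real mat)" "j' < dim_col (1\<^sub>m (blk_off r K) :: real mat)"
  then have j: "j < blk_off r K" and j': "j' < blk_off r K" by auto
  obtain k i where ki: "k < K" "i < r k" "j = blk_off r k + i" using blk_off_decomp[OF j] by blast
  obtain k' i' where ki': "k' < K" "i' < r k'" "j' = blk_off r k' + i'"
    using blk_off_decomp[OF j'] by blast
  have "(?U\<^sup>T * ?U) $$ (j, j') = col ?U j \<bullet> col ?U j'" using U j j' by (subst index_mult_mat) auto
  also have "\<dots> = col (Ws k) i \<bullet> col (Ws k') i'"
    using col_hcat[of Ws k d r K i] col_hcat[of Ws k' d r K i'] Ws ki ki' by simp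
  also have "\<dots> = (if j = j' then 1 else 0)"
  proof (cases "k = k'")
    case True
    then have "(i = i') = (j = j')" using ki ki' by auto
    then show ?thesis using col_orthonormal[of "Ws k" d "r k" i i'] Ws WW ki ki' True by auto
  next
    case False
    have ne: "j \<noteq> j'"
    proof
      assume "j = j'"
      then have "blk_of r j = blk_of r j'" by simp
      then show False
        using blk_of_blk_off_add[of i r k] blk_of_blk_off_add[of i' r k'] ki ki' False by simp
    qed
    have "col (Ws k) i \<bullet> col (Ws k') i' = (Ws k *\<^sub>v unit_vec (r k) i) \<bullet> (Ws k' *\<^sub>v unit_vec (r k') i')"
      using mult_mat_vec_unit_vec[of "Ws k" d "r k" i] mult_mat_vec_unit_vec[of "Ws k'" d "r k'" i'] Ws ki ki' by simp
    also have "\<dots> = 0" using orth ki(1) ki'(1) False ki ki' by auto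
    finally show ?thesis using ne by simp
  qed
  finally show "(?U\<^sup>T * ?U) $$ (j, j') = 1\<^sub>m (blk_off r K) $$ (j, j')" using j j' by simp
qed (auto simp: hcat_def)

subsection \<open>Unfoldings of the tensor\<close>

lemma sum_lessThan_mult: "(\<Sum>j<(d::nat)*n. f j) = (\<Sum>i<n. \<Sum>c<d. f (i*d + c))"
proof (induction n)
  case 0 then show ?case by simp
next
  case (Suc n)
  have "(\<Sum>j<d * Suc n. f j) = (\<Sum>j<d*n + d. f j)" by (simp add: algebra_simps)
  also have "\<dots> = (\<Sum>j<d*n. f j) + (\<Sum>c<d. f (d*n + c))" by (rule sum_lessThan_add)
  finally show ?case using Suc by (simp add: mult.commute)
qed

lemma sum_by_label:
  assumes "\<forall>i<n. s i < K"
  shows "(\<Sum>i<n. g (s i)) = (\<Sum>k<K. real (cluster_size n s k) * (g k :: real))"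
proof -
  have "(\<Sum>i<n. g (s i)) = (\<Sum>k<K. \<Sum>i\<in>{i\<in>{..<n}. s i = k}. g (s i))"
    using assms by (intro sum.group[symmetric]) auto
  also have "\<dots> = (\<Sum>k<K. real (cluster_size n s k) * g k)"
  proof (intro sum.cong refl)
    fix k
    have "(\<Sum>i\<in>{i\<in>{..<n}. s i = k}. g (s i)) = (\<Sum>i\<in>{i. i < n \<and> s i = k}. g k)"
      by (rule sum.cong) auto
    then show "(\<Sum>i\<in>{i\<in>{..<n}. s i = k}. g (s i)) = real (cluster_size n s k) * g k"
      by (simp add: cluster_size_def)
  qed
  finally show ?thesis .
qed

lemma unfold1_gram_index:
  fixes Ms :: "nat \<Rightarrow> real mat"
  assumes Ms: "\<forall>k<K. Ms k \<in> carrier_mat d1 d2" and lab: "\<forall>i<n. s i < K"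
    and a: "a < d1" and b: "b < d1"
  shows "(unfold1 d1 d2 n Ms s * (unfold1 d1 d2 n Ms s)\<^sup>T) $$ (a,b)
       = (\<Sum>k<K. real (cluster_size n s k) * (Ms k * (Ms k)\<^sup>T) $$ (a,b))"
proof -
  let ?M = "unfold1 d1 d2 n Ms s"
  have "(?M * ?M\<^sup>T) $$ (a,b) = (\<Sum>j<d2*n. ?M $$ (a,j) * ?M $$ (b,j))"
    using a b unfolding unfold1_def by (simp add: scalar_prod_def atLeast0LessThan)
  also have "\<dots> = (\<Sum>i<n. \<Sum>c<d2. Ms (s i) $$ (a,c) * Ms (s i) $$ (b,c))"
    unfolding sum_lessThan_mult
  proof (intro sum.cong refl)
    fix i c assume i: "i \<in> {..<n}" and c: "c \<in> {..<d2}"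
    have "i * d2 + c < d2 * n"
    proof -
      have "i * d2 + c < i * d2 + d2" using c by simp
      also have "\<dots> = (i + 1) * d2" by simp
      also have "\<dots> \<le> n * d2" using i by (intro mult_right_mono) auto
      finally show ?thesis by (simp add: mult.commute)
    qed
    moreover have "(i * d2 + c) div d2 = i" "(i * d2 + c) mod d2 = c" using c by auto
    ultimately show "?M $$ (a, i * d2 + c) * ?M $$ (b, i * d2 + c) = Ms (s i) $$ (a,c) * Ms (s i) $$ (b,c)"
      using a b unfolding unfold1_def by simp
  qed
  also have "\<dots> = (\<Sum>i<n. (Ms (s i) * (Ms (s i))\<^sup>T) $$ (a,b))"
  proof (intro sum.cong refl)
    fix i assume "i \<in> {..<n}"
    then have "Ms (s i) \<in> carrier_mat d1 d2" using Ms lab by auto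
    then show "(\<Sum>c<d2. Ms (s i) $$ (a,c) * Ms (s i) $$ (b,c)) = (Ms (s i) * (Ms (s i))\<^sup>T) $$ (a,b)"
      using a b by (simp add: scalar_prod_def atLeast0LessThan)
  qed
  also have "\<dots> = (\<Sum>k<K. real (cluster_size n s k) * (Ms k * (Ms k)\<^sup>T) $$ (a,b))"
    by (rule sum_by_label[OF lab])
  finally show ?thesis .
qed

lemma index_mult_smult_mult_transpose:
  fixes U X :: "real mat"
  assumes U: "U \<in> carrier_mat d r" and X: "X \<in> carrier_mat r r" and a: "a < d" and b: "b < d"
  shows "(U * (c \<cdot>\<^sub>m X) * U\<^sup>T) $$ (a,b) = c * (U * X * U\<^sup>T) $$ (a,b)"
  using index_mult_mult_transpose[OF U _ U a b, of "c \<cdot>\<^sub>m X"] index_mult_mult_transpose[OF U X U a b] X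
  by (simp add: sum_distrib_left algebra_simps)

lemma unfold2_eq_unfold1_transpose:
  assumes Ms: "\<forall>k<K. Ms k \<in> carrier_mat d1 d2" and lab: "\<forall>i<n. s i < K"
  shows "unfold2 d1 d2 n Ms s = unfold1 d2 d1 n (\<lambda>k. (Ms k)\<^sup>T) s"
proof (rule eq_matI)
  fix b j assume "b < dim_row (unfold1 d2 d1 n (\<lambda>k. (Ms k)\<^sup>T) s)"
    and "j < dim_col (unfold1 d2 d1 n (\<lambda>k. (Ms k)\<^sup>T) s)"
  then have b: "b < d2" and j: "j < n * d1" by (auto simp: unfold1_def mult.commute)
  moreover have "0 < d1" using j by (cases d1) auto
  ultimately have "j div d1 < n" "j mod d1 < d1" by (auto simp: less_mult_imp_div_less)
  moreover have "dim_row (Ms (s (j div d1))) = d1" "dim_col (Ms (s (j div d1))) = d2"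
    using Ms lab calculation by auto
  ultimately show "unfold2 d1 d2 n Ms s $$ (b, j) = unfold1 d2 d1 n (\<lambda>k. (Ms k)\<^sup>T) s $$ (b, j)"
    using Ms lab b j by (simp add: unfold1_def unfold2_def mult.commute)
qed (auto simp: unfold1_def unfold2_def)

text \<open>Each label k contributes n_k copies of M_k M_k^T = W_k S_k^2 W_k^T.\<close>
lemma unfold1_gram_factorization:
  fixes Ms Ws Ss Zs :: "nat \<Rightarrow> real mat"
  assumes Ws: "\<forall>k<K. Ws k \<in> carrier_mat d1 (r k)" and Zs: "\<forall>k<K. Zs k \<in> carrier_mat d2 (r k)"
    and Ss: "\<forall>k<K. Ss k \<in> carrier_mat (r k) (r k)" "\<forall>k<K. diagonal_mat (Ss k)"
    and Zs_orth: "\<forall>k<K. (Zs k)\<^sup>T * Zs k = 1\<^sub>m (r k)"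
    and svd: "\<forall>k<K. Ms k = Ws k * Ss k * (Zs k)\<^sup>T"
    and lab: "\<forall>i<n. s i < K"
  shows "unfold1 d1 d2 n Ms s * (unfold1 d1 d2 n Ms s)\<^sup>T
    = hcat d1 r K Ws * block_diag r K (\<lambda>k. real (cluster_size n s k) \<cdot>\<^sub>m (Ss k * Ss k)) * (hcat d1 r K Ws)\<^sup>T"
proof (rule eq_matI)
  let ?c = "\<lambda>k. real (cluster_size n s k)"
  fix a b assume "a < dim_row (hcat d1 r K Ws * block_diag r K (\<lambda>k. ?c k \<cdot>\<^sub>m (Ss k * Ss k)) * (hcat d1 r K Ws)\<^sup>T)"
    "b < dim_col (hcat d1 r K Ws * block_diag r K (\<lambda>k. ?c k \<cdot>\<^sub>m (Ss k * Ss k)) * (hcat d1 r K Ws)\<^sup>T)"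
  then have a: "a < d1" and b: "b < d1" by (auto simp: hcat_def)
  have Ms: "\<forall>k<K. Ms k \<in> carrier_mat d1 d2"
    using svd Ws Ss Zs by (metis mult_carrier_mat transpose_carrier_mat)
  have block: "(Ws k * (?c k \<cdot>\<^sub>m (Ss k * Ss k)) * (Ws k)\<^sup>T) $$ (a,b) = ?c k * (Ms k * (Ms k)\<^sup>T) $$ (a,b)"
    if k: "k < K" for k
  proof -
    have "Ms k * (Ms k)\<^sup>T = Ws k * (Ss k * Ss k) * (Ws k)\<^sup>T"
      using gram_svd[of "Ws k" d1 "r k" "Ss k" "Zs k" d2] diagonal_mat_transpose[of "Ss k" "r k"]
        Ws Ss Zs Zs_orth svd k by auto
    moreover have "Ss k * Ss k \<in> carrier_mat (r k) (r k)" using Ss k by auto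
    ultimately show ?thesis
      using index_mult_smult_mult_transpose[of "Ws k" d1 "r k" "Ss k * Ss k" a b] Ws k a b by simp
  qed
  have "(unfold1 d1 d2 n Ms s * (unfold1 d1 d2 n Ms s)\<^sup>T) $$ (a,b)
      = (\<Sum>k<K. ?c k * (Ms k * (Ms k)\<^sup>T) $$ (a,b))"
    by (rule unfold1_gram_index[OF Ms lab a b])
  also have "\<dots> = (\<Sum>k<K. (Ws k * (?c k \<cdot>\<^sub>m (Ss k * Ss k)) * (Ws k)\<^sup>T) $$ (a,b))"
    using block by simp
  also have "\<dots> = (hcat d1 r K Ws * block_diag r K (\<lambda>k. ?c k \<cdot>\<^sub>m (Ss k * Ss k)) * (hcat d1 r K Ws)\<^sup>T) $$ (a,b)"
    using hcat_block_diag_hcat_index[OF Ws _ a b, of "\<lambda>k. ?c k \<cdot>\<^sub>m (Ss k * Ss k)"] Ss by fastforce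
  finally show "(unfold1 d1 d2 n Ms s * (unfold1 d1 d2 n Ms s)\<^sup>T) $$ (a,b)
      = (hcat d1 r K Ws * block_diag r K (\<lambda>k. ?c k \<cdot>\<^sub>m (Ss k * Ss k)) * (hcat d1 r K Ws)\<^sup>T) $$ (a,b)" .
qed (auto simp: unfold1_def hcat_def)

subsection \<open>Gram factorizations through concatenated orthonormal blocks\<close>

locale block_gram =
  fixes A :: "real mat" and d N K :: nat and r :: "nat \<Rightarrow> nat" and Ws Ds :: "nat \<Rightarrow> real mat"
    and lo hi :: real
  assumes A_carrier: "A \<in> carrier_mat d N"
    and Ws_carrier: "\<forall>k<K. Ws k \<in> carrier_mat d (r k)"
    and Ws_orthonormal: "\<forall>k<K. (Ws k)\<^sup>T * Ws k = 1\<^sub>m (r k)"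
    and Ds_carrier: "\<forall>k<K. Ds k \<in> carrier_mat (r k) (r k)"
    and Ds_diagonal: "\<forall>k<K. diagonal_mat (Ds k)"
    and Ds_bounds: "\<forall>k<K. \<forall>i<r k. lo \<le> Ds k $$ (i,i) \<and> Ds k $$ (i,i) \<le> hi"
    and lo_pos: "0 < lo"
    and K_pos: "0 < K" and r0_pos: "0 < r 0"
    and gram: "A * A\<^sup>T = hcat d r K Ws * block_diag r K Ds * (hcat d r K Ws)\<^sup>T"
begin

abbreviation U :: "real mat" where "U \<equiv> hcat d r K Ws"

lemma transpose_nonzero: "\<exists>w0\<in>carrier_vec d. U\<^sup>T *\<^sub>v w0 \<noteq> 0\<^sub>v (blk_off r K)"
  using hcat_transpose_nonzero[OF K_pos] Ws_carrier Ws_orthonormal K_pos r0_pos by blast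

lemma cond_num_le_of_range_bounds:
  assumes c1: "c1 > 0"
    and range_bounds: "\<And>z. z \<in> carrier_vec (blk_off r K) \<Longrightarrow>
        c1 * ((U *\<^sub>v z) \<bullet> (U *\<^sub>v z)) \<le> (U\<^sup>T *\<^sub>v (U *\<^sub>v z)) \<bullet> (U\<^sup>T *\<^sub>v (U *\<^sub>v z)) \<and>
        (U\<^sup>T *\<^sub>v (U *\<^sub>v z)) \<bullet> (U\<^sup>T *\<^sub>v (U *\<^sub>v z)) \<le> c2 * ((U *\<^sub>v z) \<bullet> (U *\<^sub>v z))"
  shows "cond_num A \<le> sqrt (hi * c2 / (lo * c1))"
proof -
  obtain w0 where w0: "w0 \<in> carrier_vec d" "U\<^sup>T *\<^sub>v w0 \<noteq> 0\<^sub>v (blk_off r K)"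
    using transpose_nonzero by blast
  show ?thesis
    by (rule cond_num_le_of_gram[OF A_carrier hcat_carrier block_diag_carrier
          diagonal_block_diag[OF Ds_carrier Ds_diagonal] block_diag_diagonal_bounds[OF Ds_bounds]
          lo_pos gram w0 c1 range_bounds])
qed

lemma cond_num_le_cond_num_hcat: "cond_num A \<le> sqrt (hi / lo) * cond_num U"
proof -
  have ne: "nz_sing_vals U \<noteq> {}"
    using transpose_nonzero nz_sing_vals_nonempty[OF hcat_carrier] by blast
  have "cond_num A \<le> sqrt (hi * (sig_max U)^2 / (lo * (sig_min U)^2))"
    using range_norm_le_sig_min[OF hcat_carrier] transpose_norm_le_sig_max[OF hcat_carrier]
      sig_min_pos[OF ne] hcat_carrier[of d r K Ws]
    by (intro cond_num_le_of_range_bounds) auto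
  also have "\<dots> = sqrt (hi / lo) * cond_num U"
    using sig_min_pos[OF ne] sig_max_pos[OF ne] lo_pos
    by (simp add: cond_num_def real_sqrt_mult real_sqrt_divide)
  finally show ?thesis .
qed

text \<open>Bessel's inequality bounds |U^T w|^2 by K |w|^2; if U has rank r 0, every w in its range
  lies in the span of the orthonormal first block, so already that block gives |U^T w|^2 \<ge> |w|^2.\<close>
lemma cond_num_le_if_rank_first_block:
  assumes rank: "vec_space.rank d U = r 0"
  shows "cond_num A \<le> sqrt (hi * real K / lo)"
proof -
  have W0: "Ws 0 \<in> carrier_mat d (r 0)" "(Ws 0)\<^sup>T * Ws 0 = 1\<^sub>m (r 0)"
    using Ws_carrier Ws_orthonormal K_pos by auto
  have "1 * (w \<bullet> w) \<le> (U\<^sup>T *\<^sub>v w) \<bullet> (U\<^sup>T *\<^sub>v w) \<and> (U\<^sup>T *\<^sub>v w) \<bullet> (U\<^sup>T *\<^sub>v w) \<le> real K * (w \<bullet> w)"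
    if z: "z \<in> carrier_vec (blk_off r K)" and w: "w = U *\<^sub>v z" for z w
  proof
    have wc: "w \<in> carrier_vec d" using w z hcat_carrier[of d r K Ws] by auto
    have norm: "(U\<^sup>T *\<^sub>v w) \<bullet> (U\<^sup>T *\<^sub>v w) = (\<Sum>k<K. ((Ws k)\<^sup>T *\<^sub>v w) \<bullet> ((Ws k)\<^sup>T *\<^sub>v w))"
      by (rule hcat_transpose_norm[OF Ws_carrier wc])
    have "(\<Sum>k<K. ((Ws k)\<^sup>T *\<^sub>v w) \<bullet> ((Ws k)\<^sup>T *\<^sub>v w)) \<le> (\<Sum>k<K. w \<bullet> w)"
      using orthonormal_transpose_norm_le Ws_carrier Ws_orthonormal wc by (intro sum_mono) auto
    then show "(U\<^sup>T *\<^sub>v w) \<bullet> (U\<^sup>T *\<^sub>v w) \<le> real K * (w \<bullet> w)" using norm by simp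
    have "\<forall>i<r 0. col U i = col (Ws 0) i"
      using col_hcat[where Ws=Ws and k=0 and d=d and r=r and K=K] W0 K_pos by (simp add: blk_off_def)
    moreover have "r 0 \<le> blk_off r K" using blk_off_mono[of 1 K r] K_pos by (simp add: blk_off_def)
    ultimately obtain z' where z': "z' \<in> carrier_vec (r 0)" "w = Ws 0 *\<^sub>v z'"
      using vec_space.range_in_first_block_span[OF W0 hcat_carrier] rank z w by blast
    then have "w \<bullet> w = ((Ws 0)\<^sup>T *\<^sub>v w) \<bullet> ((Ws 0)\<^sup>T *\<^sub>v w)"
      using orthonormal_isometry[OF W0 z'(1)] by simp
    also have "\<dots> \<le> (\<Sum>k<K. ((Ws k)\<^sup>T *\<^sub>v w) \<bullet> ((Ws k)\<^sup>T *\<^sub>v w))"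
      using K_pos by (intro member_le_sum) (auto intro: scalar_prod_self_nonneg)
    finally show "1 * (w \<bullet> w) \<le> (U\<^sup>T *\<^sub>v w) \<bullet> (U\<^sup>T *\<^sub>v w)" using norm by simp
  qed
  then show ?thesis using cond_num_le_of_range_bounds[of 1 "real K"] by simp
qed

lemma cond_num_le_if_orthogonal_blocks:
  assumes "\<forall>k<K. \<forall>l<K. k \<noteq> l \<longrightarrow> (\<forall>x y. x \<in> carrier_vec (r k) \<longrightarrow> y \<in> carrier_vec (r l)
              \<longrightarrow> (Ws k *\<^sub>v x) \<bullet> (Ws l *\<^sub>v y) = 0)"
  shows "cond_num A \<le> sqrt (hi / lo)"
proof -
  have "U\<^sup>T * U = 1\<^sub>m (blk_off r K)" by (rule hcat_orthonormal[OF Ws_carrier Ws_orthonormal assms])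
  then show ?thesis
    using orthonormal_isometry[OF hcat_carrier] cond_num_le_of_range_bounds[of 1 1] by simp
qed

end

lemma cluster_size_le: "cluster_size n s k \<le> n"
proof -
  have "{i. i < n \<and> s i = k} \<subseteq> {..<n}" by auto
  then show ?thesis unfolding cluster_size_def by (metis card_lessThan card_mono finite_lessThan)
qed

lemma cluster_size_Min_Max:
  fixes n K :: nat and s :: "nat \<Rightarrow> nat"
  defines "nmin \<equiv> Min (cluster_size n s ` {0..<K})" and "nmax \<equiv> Max (cluster_size n s ` {0..<K})"
  assumes K: "0 < K" and pos: "\<forall>k<K. 1 \<le> cluster_size n s k"
  shows "0 < nmin" and "nmax \<le> n" and "\<forall>k<K. nmin \<le> cluster_size n s k \<and> cluster_size n s k \<le> nmax"
proof -
  have fin: "finite (cluster_size n s ` {0..<K})" "cluster_size n s ` {0..<K} \<noteq> {}" using K by auto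
  show "0 < nmin" "nmax \<le> n" "\<forall>k<K. nmin \<le> cluster_size n s k \<and> cluster_size n s k \<le> nmax"
    using Min_in[OF fin] Max_in[OF fin] pos cluster_size_le[of n s] fin
    unfolding nmin_def nmax_def by auto
qed

lemma svd_diag_entries_between:
  fixes Ms Us Ss Vs :: "nat \<Rightarrow> real mat" and K d1 d2 :: nat and r :: "nat \<Rightarrow> nat"
  defines "Smax \<equiv> Max ((\<lambda>k. sig_max (Ms k)) ` {0..<K})"
    and "Smin \<equiv> Min ((\<lambda>k. sig_min (Ms k)) ` {0..<K})"
  assumes K: "0 < K" and r: "\<forall>k<K. 0 < r k"
    and Us: "\<forall>k<K. Us k \<in> carrier_mat d1 (r k)" and Vs: "\<forall>k<K. Vs k \<in> carrier_mat d2 (r k)"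
    and Ss: "\<forall>k<K. Ss k \<in> carrier_mat (r k) (r k)" "\<forall>k<K. diagonal_mat (Ss k)"
    and Us_orth: "\<forall>k<K. (Us k)\<^sup>T * Us k = 1\<^sub>m (r k)" and Vs_orth: "\<forall>k<K. (Vs k)\<^sup>T * Vs k = 1\<^sub>m (r k)"
    and Ss_pos: "\<forall>k<K. \<forall>i<r k. Ss k $$ (i,i) > 0"
    and svd: "\<forall>k<K. Ms k = Us k * Ss k * (Vs k)\<^sup>T"
  shows "0 < Smin" and "Smin \<le> Smax"
    and "\<forall>k<K. \<forall>i<r k. Smin \<le> Ss k $$ (i,i) \<and> Ss k $$ (i,i) \<le> Smax"
proof -
  have sv: "Ss k $$ (i,i) \<in> nz_sing_vals (Ms k)" if "k < K" "i < r k" for k i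
    using diag_entry_in_nz_sing_vals[of "Us k" d1 "r k" "Ss k" "Vs k" d2 i] that
      Us Vs Ss Us_orth Vs_orth Ss_pos svd by auto
  have "Smin \<in> (\<lambda>k. sig_min (Ms k)) ` {0..<K}" unfolding Smin_def using K by (intro Min_in) auto
  then show "0 < Smin" using sig_min_pos sv r by fastforce
  show between: "\<forall>k<K. \<forall>i<r k. Smin \<le> Ss k $$ (i,i) \<and> Ss k $$ (i,i) \<le> Smax"
  proof (intro allI impI conjI)
    fix k i assume k: "k < K" and i: "i < r k"
    have "Smin \<le> sig_min (Ms k)" unfolding Smin_def using k by (intro Min_le) auto
    also have "\<dots> \<le> Ss k $$ (i,i)" by (rule sig_min_le[OF sv[OF k i]])
    finally show "Smin \<le> Ss k $$ (i,i)" .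
    have "Ss k $$ (i,i) \<le> sig_max (Ms k)" by (rule sig_max_ge[OF sv[OF k i]])
    also have "\<dots> \<le> Smax" unfolding Smax_def using k by (intro Max_ge) auto
    finally show "Ss k $$ (i,i) \<le> Smax" .
  qed
  then show "Smin \<le> Smax" using K r by fastforce
qed

lemma transpose_svd_family:
  fixes Ms Us Ss Vs :: "nat \<Rightarrow> real mat"
  assumes Us: "\<forall>k<K. Us k \<in> carrier_mat d1 (r k)" and Vs: "\<forall>k<K. Vs k \<in> carrier_mat d2 (r k)"
    and Ss: "\<forall>k<K. Ss k \<in> carrier_mat (r k) (r k)" "\<forall>k<K. diagonal_mat (Ss k)"
    and svd: "\<forall>k<K. Ms k = Us k * Ss k * (Vs k)\<^sup>T"
  shows "\<forall>k<K. (Ms k)\<^sup>T = Vs k * Ss k * (Us k)\<^sup>T"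
proof (intro allI impI)
  fix k assume "k < K"
  note k = Us[rule_format, OF this] Ss(1)[rule_format, OF this] Vs[rule_format, OF this]
    Ss(2)[rule_format, OF this] svd[rule_format, OF this]
  show "(Ms k)\<^sup>T = Vs k * Ss k * (Us k)\<^sup>T"
    unfolding k(5) transpose_svd[OF k(1-3)] diagonal_mat_transpose[OF k(2,4)] ..
qed

lemma diagonal_mat_smult_square:
  fixes S :: "real mat"
  assumes "S \<in> carrier_mat r r" "diagonal_mat S"
  shows "diagonal_mat (c \<cdot>\<^sub>m (S * S))"
  using assms diagonal_mat_square_index[OF assms] unfolding diagonal_mat_def by auto

lemma weighted_square_diag_bounds:
  fixes S :: "real mat" and c cmin cmax smin smax :: real
  assumes S: "S \<in> carrier_mat r r" "diagonal_mat S" and i: "i < r"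
    and c: "0 \<le> cmin" "cmin \<le> c" "c \<le> cmax" and s: "0 \<le> smin" "smin \<le> S $$ (i,i)" "S $$ (i,i) \<le> smax"
  shows "cmin * smin^2 \<le> (c \<cdot>\<^sub>m (S * S)) $$ (i,i) \<and> (c \<cdot>\<^sub>m (S * S)) $$ (i,i) \<le> cmax * smax^2"
proof -
  have "(c \<cdot>\<^sub>m (S * S)) $$ (i,i) = c * (S $$ (i,i))^2"
    using diagonal_mat_square_index[OF S i i] S i by (simp add: power2_eq_square)
  moreover have "smin^2 \<le> (S $$ (i,i))^2" "(S $$ (i,i))^2 \<le> smax^2"
    using s by (auto intro: power_mono)
  ultimately show ?thesis using c by (auto intro: mult_mono order_trans[OF _ s(2)])
qed

lemma block_gram_unfold1:
  fixes Ms Ws Ss Zs :: "nat \<Rightarrow> real mat" and cmin cmax :: nat and smin smax :: real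
  assumes K: "0 < K" and r: "\<forall>k<K. 0 < r k"
    and Ws: "\<forall>k<K. Ws k \<in> carrier_mat d1 (r k)" and Zs: "\<forall>k<K. Zs k \<in> carrier_mat d2 (r k)"
    and Ss: "\<forall>k<K. Ss k \<in> carrier_mat (r k) (r k)" "\<forall>k<K. diagonal_mat (Ss k)"
    and Ws_orth: "\<forall>k<K. (Ws k)\<^sup>T * Ws k = 1\<^sub>m (r k)" and Zs_orth: "\<forall>k<K. (Zs k)\<^sup>T * Zs k = 1\<^sub>m (r k)"
    and svd: "\<forall>k<K. Ms k = Ws k * Ss k * (Zs k)\<^sup>T"
    and lab: "\<forall>i<n. s i < K"
    and c: "0 < cmin" "\<forall>k<K. cmin \<le> cluster_size n s k \<and> cluster_size n s k \<le> cmax"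
    and S: "0 < smin" "\<forall>k<K. \<forall>i<r k. smin \<le> Ss k $$ (i,i) \<and> Ss k $$ (i,i) \<le> smax"
  shows "block_gram (unfold1 d1 d2 n Ms s) d1 (d2 * n) K r Ws
    (\<lambda>k. real (cluster_size n s k) \<cdot>\<^sub>m (Ss k * Ss k)) (real cmin * smin^2) (real cmax * smax^2)"
proof
  show "unfold1 d1 d2 n Ms s * (unfold1 d1 d2 n Ms s)\<^sup>T
    = hcat d1 r K Ws * block_diag r K (\<lambda>k. real (cluster_size n s k) \<cdot>\<^sub>m (Ss k * Ss k)) * (hcat d1 r K Ws)\<^sup>T"
    by (rule unfold1_gram_factorization[OF Ws Zs Ss Zs_orth svd lab])
  show "\<forall>k<K. \<forall>i<r k. real cmin * smin^2 \<le> (real (cluster_size n s k) \<cdot>\<^sub>m (Ss k * Ss k)) $$ (i,i)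
      \<and> (real (cluster_size n s k) \<cdot>\<^sub>m (Ss k * Ss k)) $$ (i,i) \<le> real cmax * smax^2"
  proof (intro allI impI)
    fix k i assume k: "k < K" and i: "i < r k"
    then show "real cmin * smin^2 \<le> (real (cluster_size n s k) \<cdot>\<^sub>m (Ss k * Ss k)) $$ (i,i)
      \<and> (real (cluster_size n s k) \<cdot>\<^sub>m (Ss k * Ss k)) $$ (i,i) \<le> real cmax * smax^2"
      using weighted_square_diag_bounds[of "Ss k" "r k" i "real cmin" "real (cluster_size n s k)"
          "real cmax" smin smax] Ss c S by auto
  qed
qed (use K r Ws Ws_orth Ss S c diagonal_mat_smult_square in \<open>auto simp: unfold1_def\<close>)

lemma weighted_condition_ratio:
  fixes nmin nmax n K :: nat and Smin Smax :: real
  defines "alpha \<equiv> real nmin / (real n / real K)"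
    and "lo \<equiv> real nmin * Smin^2" and "hi \<equiv> real nmax * Smax^2"
  assumes nmin: "0 < nmin" and nmax: "nmax \<le> n" and K: "0 < K" and S: "0 < Smin" "Smin \<le> Smax"
  shows "sqrt (hi / lo) = Smax / Smin * sqrt (real nmax / real nmin)"
    and "sqrt (hi / lo) \<le> Smax / Smin * sqrt (real K / alpha)"
    and "sqrt (hi * real K / lo) \<le> Smax / Smin * sqrt (real K ^ 2 / alpha)"
proof -
  have "hi / lo = (Smax / Smin)^2 * (real nmax / real nmin)"
    unfolding hi_def lo_def using S nmin by (simp add: field_simps power2_eq_square)
  then have "sqrt (hi / lo) = sqrt ((Smax / Smin)^2) * sqrt (real nmax / real nmin)"
    by (simp only: real_sqrt_mult)
  then show ratio: "sqrt (hi / lo) = Smax / Smin * sqrt (real nmax / real nmin)" using S by simp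
  have alpha: "real K / alpha = real n / real nmin"
    unfolding alpha_def using nmin K by (cases "n = 0") (auto simp: field_simps)
  have le: "real nmax / real nmin \<le> real n / real nmin"
    using nmax by (simp add: divide_right_mono)
  have kappa0: "0 \<le> Smax / Smin" using S by simp
  have "sqrt (real nmax / real nmin) \<le> sqrt (real K / alpha)" unfolding alpha using le by simp
  then show "sqrt (hi / lo) \<le> Smax / Smin * sqrt (real K / alpha)"
    unfolding ratio using kappa0 by (rule mult_left_mono)
  have "real K ^ 2 / alpha = real K / alpha * real K" by (simp add: power2_eq_square)
  then have "real K ^ 2 / alpha = real n / real nmin * real K" unfolding alpha .
  moreover have "real nmax / real nmin * real K \<le> real n / real nmin * real K"
    using mult_right_mono[OF le, of "real K"] by simp
  ultimately have "sqrt (real nmax / real nmin) * sqrt (real K) \<le> sqrt (real K ^ 2 / alpha)"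
    unfolding real_sqrt_mult[symmetric] by simp
  then have "Smax / Smin * (sqrt (real nmax / real nmin) * sqrt (real K))
      \<le> Smax / Smin * sqrt (real K ^ 2 / alpha)"
    using kappa0 by (rule mult_left_mono)
  moreover have "sqrt (hi * real K / lo) = sqrt (hi / lo) * sqrt (real K)"
    by (simp add: real_sqrt_mult[symmetric])
  ultimately show "sqrt (hi * real K / lo) \<le> Smax / Smin * sqrt (real K ^ 2 / alpha)"
    unfolding ratio mult.assoc by simp
qed

theorem lemma3p4:
  fixes d1 d2 n K :: nat
    and r :: "nat \<Rightarrow> nat"
    and Ms Us Ss Vs :: "nat \<Rightarrow> real mat"
    and s :: "nat \<Rightarrow> nat"
  defines "nk \<equiv> cluster_size n s"
  defines "nmin \<equiv> Min (nk ` {0..<K})"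
  defines "nmax \<equiv> Max (nk ` {0..<K})"
  defines "alpha \<equiv> real nmin / (real n / real K)"
  defines "M1 \<equiv> unfold1 d1 d2 n Ms s"
  defines "M2 \<equiv> unfold2 d1 d2 n Ms s"
  defines "kappa1 \<equiv> cond_num M1"
  defines "kappa2 \<equiv> cond_num M2"
  defines "kappa0 \<equiv> Max ((\<lambda>k. sig_max (Ms k)) ` {0..<K}) / Min ((\<lambda>k. sig_min (Ms k)) ` {0..<K})"
  defines "U \<equiv> hcat d1 r K Us"
  defines "V \<equiv> hcat d2 r K Vs"
  defines "D \<equiv> block_diag r K (\<lambda>k. real (nk k) \<cdot>\<^sub>m (Ss k * Ss k))"
  assumes K_pos: "K \<ge> 1"
    and r_pos: "\<forall>k<K. r k \<ge> 1"
    and Ms_dim: "\<forall>k<K. Ms k \<in> carrier_mat d1 d2"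
    and Us_dim: "\<forall>k<K. Us k \<in> carrier_mat d1 (r k)"
    and Vs_dim: "\<forall>k<K. Vs k \<in> carrier_mat d2 (r k)"
    and Ss_dim: "\<forall>k<K. Ss k \<in> carrier_mat (r k) (r k)"
    and Us_orth: "\<forall>k<K. (Us k)\<^sup>T * Us k = 1\<^sub>m (r k)"
    and Vs_orth: "\<forall>k<K. (Vs k)\<^sup>T * Vs k = 1\<^sub>m (r k)"
    and Ss_diag: "\<forall>k<K. diagonal_mat (Ss k)"
    and Ss_pos: "\<forall>k<K. \<forall>i<r k. Ss k $$ (i,i) > 0"
    and Ss_sorted: "\<forall>k<K. \<forall>i j. i \<le> j \<longrightarrow> j < r k \<longrightarrow> Ss k $$ (j,j) \<le> Ss k $$ (i,i)"
    and svd: "\<forall>k<K. Ms k = Us k * Ss k * (Vs k)\<^sup>T"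
    and labels: "\<forall>i<n. s i < K"
    and nk_pos: "\<forall>k<K. nk k \<ge> 1"
  shows "M1 * M1\<^sup>T = U * D * U\<^sup>T
    \<and> M2 * M2\<^sup>T = V * D * V\<^sup>T
    \<and> kappa1 \<le> kappa0 * cond_num U * sqrt (real nmax / real nmin)
    \<and> kappa2 \<le> kappa0 * cond_num V * sqrt (real nmax / real nmin)
    \<and> (r 0 = Max (r ` {0..<K}) \<and> vec_space.rank d1 U = r 0 \<and> vec_space.rank d2 V = r 0
           \<longrightarrow> max kappa1 kappa2 \<le> kappa0 * sqrt (real K ^ 2 / alpha))
    \<and> ((\<forall>k<K. \<forall>l<K. k \<noteq> l \<longrightarrow> (\<forall>x y. x \<in> carrier_vec (r k) \<longrightarrow> y \<in> carrier_vec (r l)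
              \<longrightarrow> (Us k *\<^sub>v x) \<bullet> (Us l *\<^sub>v y) = 0)) \<and>
         (\<forall>k<K. \<forall>l<K. k \<noteq> l \<longrightarrow> (\<forall>x y. x \<in> carrier_vec (r k) \<longrightarrow> y \<in> carrier_vec (r l)
              \<longrightarrow> (Vs k *\<^sub>v x) \<bullet> (Vs l *\<^sub>v y) = 0))
           \<longrightarrow> max kappa1 kappa2 \<le> kappa0 * sqrt (real K / alpha))"
proof -
  have K: "0 < K" and r: "\<forall>k<K. 0 < r k" using K_pos r_pos by auto
  define Smax where "Smax = Max ((\<lambda>k. sig_max (Ms k)) ` {0..<K})"
  define Smin where "Smin = Min ((\<lambda>k. sig_min (Ms k)) ` {0..<K})"
  have kappa0: "kappa0 = Smax / Smin" unfolding kappa0_def Smax_def Smin_def ..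
  note S = svd_diag_entries_between[OF K r Us_dim Vs_dim Ss_dim Ss_diag Us_orth Vs_orth Ss_pos svd,
      folded Smax_def Smin_def]
  note nk = cluster_size_Min_Max[OF K nk_pos[unfolded nk_def],
      folded nmin_def[unfolded nk_def] nmax_def[unfolded nk_def]]
  interpret M1: block_gram M1 d1 "d2 * n" K r Us "\<lambda>k. real (nk k) \<cdot>\<^sub>m (Ss k * Ss k)"
      "real nmin * Smin^2" "real nmax * Smax^2"
    unfolding M1_def nk_def
    by (rule block_gram_unfold1[OF K r Us_dim Vs_dim Ss_dim Ss_diag Us_orth Vs_orth svd labels
          nk(1,3) S(1,3)])
  interpret M2: block_gram M2 d2 "d1 * n" K r Vs "\<lambda>k. real (nk k) \<cdot>\<^sub>m (Ss k * Ss k)"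
      "real nmin * Smin^2" "real nmax * Smax^2"
    unfolding M2_def nk_def unfold2_eq_unfold1_transpose[OF Ms_dim labels]
    by (rule block_gram_unfold1[OF K r Vs_dim Us_dim Ss_dim Ss_diag Vs_orth Us_orth
          transpose_svd_family[OF Us_dim Vs_dim Ss_dim Ss_diag svd] labels nk(1,3) S(1,3)])
  note bounds = weighted_condition_ratio[OF nk(1,2) K S(1,2), folded alpha_def kappa0]
  show ?thesis
    using M1.gram M2.gram M1.cond_num_le_cond_num_hcat M2.cond_num_le_cond_num_hcat
      order_trans[OF M1.cond_num_le_if_rank_first_block bounds(3)]
      order_trans[OF M2.cond_num_le_if_rank_first_block bounds(3)]
      order_trans[OF M1.cond_num_le_if_orthogonal_blocks bounds(2)]
      order_trans[OF M2.cond_num_le_if_orthogonal_blocks bounds(2)]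
    unfolding U_def V_def D_def kappa1_def kappa2_def bounds(1) by (auto simp: mult_ac)
qed

end
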